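(* Let $x>0$, $y>0$, $c\ge 1$, $d\ge 1$ be real numbers and let \begin{align*} f(c,d,x,y)=\;&(14-6\sqrt{5})(c^2xy^3+d^2x^3y+cdx^3y+cdxy^3+cx^3y+dxy^3)+(32-12\sqrt{5})(c^2x^2y^2+d^2x^2y^2)\\ &+(12\sqrt{5}-48)(c^2xy^2+d^2x^2y)+(12\sqrt{5}-24)(c^2x^2y+d^2xy^2)+(20\sqrt{5}-44)(cx^2y^3+dx^3y^2)\\ &+(28-12\sqrt{5})(cxy^3+dx^3y)+(10\sqrt{5}-22)(cx^3y^2+dx^2y^3)+(48-24\sqrt{5})(cx^2y^2+dx^2y^2)\\ &+(4+4\sqrt{5})(cxy^2+dx^2y)+(6\sqrt{5}-6)(c^3dx+cd^3y)+(6+2\sqrt{5})(c^3dy^2+cd^3x^2)\\ &+(2\sqrt{5}-26)(c^3dy+cd^3x)+(8\sqrt{5}-4)(c^3xy^2+d^3x^2y)+(18-6\sqrt{5})(c^3xy+d^3xy)\\ &+(6\sqrt{5}-30)(c^2d^2x+c^2d^2y)+(18-6\sqrt{5})(c^2dx^2+cd^2y^2)+(18-14\sqrt{5})(c^2dy^2+cd^2x^2)\\ &+(8+4\sqrt{5})(c^2dy+cd^2x)+(4\sqrt{5}-8)(cdx^3+cdy^3)+(4\sqrt{5}-8)(c^2y^3+d^2x^3)\\ &+(6+2\sqrt{5})(c^2y^2+d^2x^2)+(10\sqrt{5}-22)(x^3y^2+x^2y^3)+(6+2\sqrt{5})(c^4y^2+d^4x^2)\\ &+(2\sqrt{5}-2)(c^4y+d^4x)+(8\sqrt{5}-16)(c^2dx^2y+cd^2xy^2)+(14\sqrt{5}-22)(c^2dxy^2+cd^2x^2y)\\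 &+(36-36\sqrt{5})(c^2dxy+cd^2xy)+(6-2\sqrt{5})(c^3dxy+cd^3xy)+(28\sqrt{5}-80)(cdx^2y+cdxy^2)\\ &+12(c^3d^2+c^2d^3)+4(c^4d+cd^4)-8\sqrt{5}(c^3y^2+d^3x^2)+4x^2y^2+(18+6\sqrt{5})cdxy\\ &+(12-4\sqrt{5})c^2d^2xy+(36-16\sqrt{5})x^3y^3+(70-30\sqrt{5})cdx^2y^2. \end{align*} Then $f(c,d,x,y)\ge 0$, with equality if and only if $c=d=x=y=1$. *)

theory Defs
  imports Complex_Main
begin

definition f4 :: "real \<Rightarrow> real \<Rightarrow> real \<Rightarrow> real \<Rightarrow> real" where
"f4 c d x y = (let s = sqrt 5 in
   (14 - 6*s)*(c^2*x*y^3 + d^2*x^3*y + c*d*x^3*y + c*d*x*y^3 + c*x^3*y + d*x*y^3)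
 + (32 - 12*s)*(c^2*x^2*y^2 + d^2*x^2*y^2)
 + (12*s - 48)*(c^2*x*y^2 + d^2*x^2*y)
 + (12*s - 24)*(c^2*x^2*y + d^2*x*y^2)
 + (20*s - 44)*(c*x^2*y^3 + d*x^3*y^2)
 + (28 - 12*s)*(c*x*y^3 + d*x^3*y)
 + (10*s - 22)*(c*x^3*y^2 + d*x^2*y^3)
 + (48 - 24*s)*(c*x^2*y^2 + d*x^2*y^2)
 + (4 + 4*s)*(c*x*y^2 + d*x^2*y)
 + (6*s - 6)*(c^3*d*x + c*d^3*y)
 + (6 + 2*s)*(c^3*d*y^2 + c*d^3*x^2)
 + (2*s - 26)*(c^3*d*y + c*d^3*x)
 + (8*s - 4)*(c^3*x*y^2 + d^3*x^2*y)
 + (18 - 6*s)*(c^3*x*y + d^3*x*y)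
 + (6*s - 30)*(c^2*d^2*x + c^2*d^2*y)
 + (18 - 6*s)*(c^2*d*x^2 + c*d^2*y^2)
 + (18 - 14*s)*(c^2*d*y^2 + c*d^2*x^2)
 + (8 + 4*s)*(c^2*d*y + c*d^2*x)
 + (4*s - 8)*(c*d*x^3 + c*d*y^3)
 + (4*s - 8)*(c^2*y^3 + d^2*x^3)
 + (6 + 2*s)*(c^2*y^2 + d^2*x^2)
 + (10*s - 22)*(x^3*y^2 + x^2*y^3)
 + (6 + 2*s)*(c^4*y^2 + d^4*x^2)
 + (2*s - 2)*(c^4*y + d^4*x)
 + (8*s - 16)*(c^2*d*x^2*y + c*d^2*x*y^2)
 + (14*s - 22)*(c^2*d*x*y^2 + c*d^2*x^2*y)
 + (36 - 36*s)*(c^2*d*x*y + c*d^2*x*y)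
 + (6 - 2*s)*(c^3*d*x*y + c*d^3*x*y)
 + (28*s - 80)*(c*d*x^2*y + c*d*x*y^2)
 + 12*(c^3*d^2 + c^2*d^3) + 4*(c^4*d + c*d^4) - 8*s*(c^3*y^2 + d^3*x^2) + 4*x^2*y^2
 + (18 + 6*s)*c*d*x*y
 + (12 - 4*s)*c^2*d^2*x*y + (36 - 16*s)*x^3*y^3 + (70 - 30*s)*c*d*x^2*y^2)"

end

theory Submission
  imports Defs
begin

(* Write f4 = A + sqrt 5 * B with integer polynomials A and B. For the two rational
   approximations s = 223/100 and s = 56/25 of sqrt 5, the polynomial
   A + s B - ((c-1)^2 + (d-1)^2 + (x-1)^2 + (y-1)^2) / 2 is nonnegative on the region
   c, d \<ge> 1, x, y \<ge> 0, witnessed by a Positivstellensatz certificate: in the shifted variables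
   c = 1 + a, d = 1 + b, x = 1 + u, y = 1 + v it equals a combination of Gram forms in monomials,
   each one an explicit sum of squares, with products of the nonnegative constraints
   a, b, 1 + u, 1 + v as multipliers. As A + s B is affine in s, the same lower bound holds at
   s = sqrt 5, which lies between the two approximations. Hence f4 is at least half the squared
   distance of (c, d, x, y) from (1, 1, 1, 1), which gives nonnegativity and the equality case. *)

lemma affine_nonneg_between:
  fixes a b s lo hi :: "'a::linordered_idom"
  assumes "0 \<le> a + lo * b" and "0 \<le> a + hi * b" and "lo \<le> s" and "s \<le> hi"
  shows "0 \<le> a + s * b"
proof (cases "0 \<le> b")
  case True
  then have "lo * b \<le> s * b" using \<open>lo \<le> s\<close> by (rule mult_right_mono[rotated])
  with assms(1) show ?thesis by simp
next
  case False
  then have "hi * b \<le> s * b" using \<open>s \<le> hi\<close> by (simp add: mult_right_mono_neg)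
  with assms(2) show ?thesis by simp
qed

lemma sqrt5_bounds: "223/100 < sqrt (5::real)" "sqrt (5::real) < 56/25"
proof -
  show "223/100 < sqrt (5::real)" by (rule real_less_rsqrt) (simp add: power2_eq_square)
  have "sqrt (5::real) < sqrt ((56/25)^2)" by (subst real_sqrt_less_iff) (simp add: power2_eq_square)
  then show "sqrt (5::real) < 56/25" by simp
qed

definition f4_rat_part :: "real \<Rightarrow> real \<Rightarrow> real \<Rightarrow> real \<Rightarrow> real" where
  "f4_rat_part c d x y =
     4 * x^2*y^2 - 22 * x^2*y^3 - 22 * x^3*y^2 + 36 * x^3*y^3 + 14 * d*x*y^3 + 4 * d*x^2*y
     + 48 * d*x^2*y^2 - 22 * d*x^2*y^3 + 28 * d*x^3*y - 44 * d*x^3*y^2 - 24 * d^2*x*y^2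
     + 6 * d^2*x^2 - 48 * d^2*x^2*y + 32 * d^2*x^2*y^2 - 8 * d^2*x^3 + 14 * d^2*x^3*y
     + 18 * d^3*x*y - 4 * d^3*x^2*y - 2 * d^4*x + 6 * d^4*x^2 + 4 * c*x*y^2 + 28 * c*x*y^3
     + 48 * c*x^2*y^2 - 44 * c*x^2*y^3 + 14 * c*x^3*y - 22 * c*x^3*y^2 - 8 * c*d*y^3 + 18 * c*d*x*y
     - 80 * c*d*x*y^2 + 14 * c*d*x*y^3 - 80 * c*d*x^2*y + 70 * c*d*x^2*y^2 - 8 * c*d*x^3
     + 14 * c*d*x^3*y + 18 * c*d^2*y^2 + 8 * c*d^2*x + 36 * c*d^2*x*y - 16 * c*d^2*x*y^2
     + 18 * c*d^2*x^2 - 22 * c*d^2*x^2*y - 6 * c*d^3*y - 26 * c*d^3*x + 6 * c*d^3*x*y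
     + 6 * c*d^3*x^2 + 4 * c*d^4 + 6 * c^2*y^2 - 8 * c^2*y^3 - 48 * c^2*x*y^2 + 14 * c^2*x*y^3
     - 24 * c^2*x^2*y + 32 * c^2*x^2*y^2 + 8 * c^2*d*y + 18 * c^2*d*y^2 + 36 * c^2*d*x*y
     - 22 * c^2*d*x*y^2 + 18 * c^2*d*x^2 - 16 * c^2*d*x^2*y - 30 * c^2*d^2*y - 30 * c^2*d^2*x
     + 12 * c^2*d^2*x*y + 12 * c^2*d^3 + 18 * c^3*x*y - 4 * c^3*x*y^2 - 26 * c^3*d*y
     + 6 * c^3*d*y^2 - 6 * c^3*d*x + 6 * c^3*d*x*y + 12 * c^3*d^2 - 2 * c^4*y + 6 * c^4*y^2
     + 4 * c^4*d"

definition f4_sqrt5_part :: "real \<Rightarrow> real \<Rightarrow> real \<Rightarrow> real \<Rightarrow> real" where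
  "f4_sqrt5_part c d x y =
     10 * x^2*y^3 + 10 * x^3*y^2 - 16 * x^3*y^3 - 6 * d*x*y^3 + 4 * d*x^2*y - 24 * d*x^2*y^2
     + 10 * d*x^2*y^3 - 12 * d*x^3*y + 20 * d*x^3*y^2 + 12 * d^2*x*y^2 + 2 * d^2*x^2
     + 12 * d^2*x^2*y - 12 * d^2*x^2*y^2 + 4 * d^2*x^3 - 6 * d^2*x^3*y - 6 * d^3*x*y - 8 * d^3*x^2
     + 8 * d^3*x^2*y + 2 * d^4*x + 2 * d^4*x^2 + 4 * c*x*y^2 - 12 * c*x*y^3 - 24 * c*x^2*y^2
     + 20 * c*x^2*y^3 - 6 * c*x^3*y + 10 * c*x^3*y^2 + 4 * c*d*y^3 + 6 * c*d*x*y + 28 * c*d*x*y^2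
     - 6 * c*d*x*y^3 + 28 * c*d*x^2*y - 30 * c*d*x^2*y^2 + 4 * c*d*x^3 - 6 * c*d*x^3*y
     - 6 * c*d^2*y^2 + 4 * c*d^2*x - 36 * c*d^2*x*y + 8 * c*d^2*x*y^2 - 14 * c*d^2*x^2
     + 14 * c*d^2*x^2*y + 6 * c*d^3*y + 2 * c*d^3*x - 2 * c*d^3*x*y + 2 * c*d^3*x^2 + 2 * c^2*y^2
     + 4 * c^2*y^3 + 12 * c^2*x*y^2 - 6 * c^2*x*y^3 + 12 * c^2*x^2*y - 12 * c^2*x^2*y^2
     + 4 * c^2*d*y - 14 * c^2*d*y^2 - 36 * c^2*d*x*y + 14 * c^2*d*x*y^2 - 6 * c^2*d*x^2
     + 8 * c^2*d*x^2*y + 6 * c^2*d^2*y + 6 * c^2*d^2*x - 4 * c^2*d^2*x*y - 8 * c^3*y^2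
     - 6 * c^3*x*y + 8 * c^3*x*y^2 + 2 * c^3*d*y + 2 * c^3*d*y^2 + 6 * c^3*d*x - 2 * c^3*d*x*y
     + 2 * c^4*y + 2 * c^4*y^2"

lemma f4_eq_parts: "f4 c d x y = f4_rat_part c d x y + sqrt 5 * f4_sqrt5_part c d x y"
  unfolding f4_def f4_rat_part_def f4_sqrt5_part_def Let_def by algebra

(* The certificates below are for s = 223/100 (suffix lo) and s = 56/25 (suffix hi), scaled by
   4914000 to clear denominators. The arguments of each Gram form are the monomials it is a
   quadratic form in. *)

definition gram_lo_0 ::
  "real \<Rightarrow> real \<Rightarrow> real \<Rightarrow> real \<Rightarrow> real \<Rightarrow>
   real \<Rightarrow> real \<Rightarrow> real \<Rightarrow> real \<Rightarrow> real \<Rightarrow>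
   real \<Rightarrow> real \<Rightarrow> real \<Rightarrow> real \<Rightarrow> real \<Rightarrow>
   real \<Rightarrow> real" where
  "gram_lo_0 z0 z1 z2 z3 z4 z5 z6 z7 z8 z9 z10 z11 z12 z13 z14 z15 =
     82456920 * z0^2 + 82456920 * z1^2 + 17788680 * z2^2 + 163636200 * z3^2 + 13071240 * z4^2
     + 112510944 * z5^2 + 25749360 * z6^2 + 23194080 * z7^2 + 51400440 * z8^2 + 163636200 * z9^2
     + 112510944 * z10^2 + 13071240 * z11^2 + 25749360 * z12^2 + 83968920 * z13^2
     + 23194080 * z14^2 + 51400440 * z15^2 + 90319320 * z0 * z1 + 60343920 * z0 * z2
     - 201670560 * z0 * z3 + 45929520 * z0 * z4 + 18501210 * z0 * z5 + 17788680 * z0 * z6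
     - 45798480 * z0 * z7 - 19819800 * z0 * z8 - 80196480 * z0 * z9 + 150892560 * z0 * z10
     + 34226010 * z0 * z11 + 36036000 * z0 * z12 - 136039176 * z0 * z13 + 9893520 * z0 * z14
     + 76619088 * z0 * z15 + 60343920 * z1 * z2 - 80196480 * z1 * z3 + 34226010 * z1 * z4
     + 150892560 * z1 * z5 + 36036000 * z1 * z6 + 9893520 * z1 * z7 + 76619088 * z1 * z8
     - 201670560 * z1 * z9 + 18501210 * z1 * z10 + 45929520 * z1 * z11 + 17788680 * z1 * z12
     - 136039176 * z1 * z13 - 45798480 * z1 * z14 - 19819800 * z1 * z15 - 67002390 * z2 * z3
     + 20737080 * z2 * z4 + 42915600 * z2 * z5 + 14938560 * z2 * z6 - 7043400 * z2 * z7
     + 16085160 * z2 * z8 - 67002390 * z2 * z9 + 42915600 * z2 * z10 + 20737080 * z2 * z11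
     + 14938560 * z2 * z12 - 63972090 * z2 * z13 - 7043400 * z2 * z14 + 16085160 * z2 * z15
     - 40884480 * z3 * z4 + 56085120 * z3 * z5 + 1801800 * z3 * z6 + 98411040 * z3 * z7
     + 85438080 * z3 * z8 + 50319360 * z3 * z9 - 221542776 * z3 * z10 - 31862376 * z3 * z11
     - 33505290 * z3 * z12 + 172551600 * z3 * z13 - 26956800 * z3 * z14 - 120742440 * z3 * z15
     + 27354600 * z4 * z5 + 17100720 * z4 * z6 - 1572480 * z4 * z7 + 11400480 * z4 * z8
     - 31862376 * z4 * z9 + 42850080 * z4 * z10 + 14651910 * z4 * z11 + 15233400 * z4 * z12
     - 37407240 * z4 * z13 + 3090360 * z4 * z14 + 21874320 * z4 * z15 + 54414360 * z5 * z6
     + 61850880 * z5 * z7 + 139885200 * z5 * z8 - 221542776 * z5 * z9 - 75765690 * z5 * z10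
     + 42850080 * z5 * z11 + 7371000 * z5 * z12 - 82413240 * z5 * z13 - 66891240 * z5 * z14
     - 76607440 * z5 * z15 + 14348880 * z6 * z7 + 31646160 * z6 * z8 - 33505290 * z6 * z9
     + 7371000 * z6 * z10 + 15233400 * z6 * z11 + 11466000 * z6 * z12 - 18622240 * z6 * z13
     - 1914640 * z6 * z14 + 4226040 * z6 * z15 + 54938520 * z7 * z8 - 26956800 * z7 * z9
     - 66891240 * z7 * z10 + 3090360 * z7 * z11 - 1914640 * z7 * z12 + 30607200 * z7 * z13
     - 16828560 * z7 * z14 - 42299712 * z7 * z15 - 120742440 * z8 * z9 - 76607440 * z8 * z10
     + 21874320 * z8 * z11 + 4226040 * z8 * z12 - 20417670 * z8 * z13 - 42299712 * z8 * z14
     - 61965540 * z8 * z15 + 56085120 * z9 * z10 - 40884480 * z9 * z11 + 1801800 * z9 * z12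
     + 172551600 * z9 * z13 + 98411040 * z9 * z14 + 85438080 * z9 * z15 + 27354600 * z10 * z11
     + 54414360 * z10 * z12 - 82413240 * z10 * z13 + 61850880 * z10 * z14 + 139885200 * z10 * z15
     + 17100720 * z11 * z12 - 37407240 * z11 * z13 - 1572480 * z11 * z14 + 11400480 * z11 * z15
     - 18622240 * z12 * z13 + 14348880 * z12 * z14 + 31646160 * z12 * z15 + 30607200 * z13 * z14
     - 20417670 * z13 * z15 + 54938520 * z14 * z15"

lemma gram_lo_0_sos:
  "gram_lo_0 z0 z1 z2 z3 z4 z5 z6 z7 z8 z9 z10 z11 z12 z13 z14 z15 =
   (8143285867 * (1000 * z0 + 555 * z1 + 371 * z2 - 1238 * z3 + 282 * z4 + 114 * z5 + 109 * z6
    - 281 * z7 - 122 * z8 - 492 * z9 + 926 * z10 + 210 * z11 + 221 * z12 - 835 * z13 + 61 * z14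
    + 470 * z15)^2
    + 5638897682 * (1000 * z1 + 238 * z2 + 281 * z3 + 78 * z4 + 1247 * z5 + 232 * z6 + 313 * z7
    + 777 * z8 - 1394 * z9 - 578 * z10 + 239 * z11 - 19 * z12 - 537 * z13 - 455 * z14
    - 553 * z15)^2
    + 238229688 * (1000 * z2 + 37 * z3 + 343 * z4 + 534 * z5 + 443 * z6 + 318 * z7 + 535 * z8
    + 37 * z9 + 534 * z10 + 343 * z11 + 443 * z12 + 184 * z13 + 318 * z14 + 535 * z15)^2
    + 3330920925 * (1000 * z3 + 202 * z4 + 592 * z5 + 246 * z6 + 476 * z7 + 544 * z8 - 73 * z9
    - 248 * z10 + 43 * z11 + 175 * z12 + 316 * z13 - 6 * z14 - 127 * z15)^2
    + 358928285 * (1000 * z4 + 331 * z5 + 837 * z6 + 232 * z7 + 277 * z8 + 541 * z9 + 1090 * z10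
    + 246 * z11 + 301 * z12 + 153 * z13 + 535 * z14 + 828 * z15)^2
    + 1000637389 * (1000 * z5 + 346 * z6 + 145 * z7 + 471 * z8 - 744 * z9 - 290 * z10 + 109 * z11
    - 136 * z12 - 235 * z13 - 296 * z14 - 296 * z15)^2
    + 1451191727 * (1000 * z6 + 10 * z7 - 52 * z8 + 509 * z9 + 152 * z10 + 54 * z11 + 116 * z12
    + 187 * z13 + 247 * z14 + 288 * z15)^2
    + 200217843 * (1000 * z7 + 517 * z8 + 766 * z9 + 493 * z10 + 410 * z11 + 635 * z12 + 342 * z13
    + 399 * z14 + 343 * z15)^2
    + 154314440 * (1000 * z8 - 229 * z9 - 74 * z10 + 119 * z11 + 776 * z12 - 111 * z13 - 192 * z14
    - 42 * z15)^2
    + 2152396433 * (1000 * z9 + 601 * z10 + 288 * z11 + 254 * z12 + 340 * z13 + 470 * z14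
    + 526 * z15)^2
    + 632131796 * (1000 * z10 + 104 * z11 + 807 * z12 + 38 * z13 + 172 * z14 + 448 * z15)^2
    + 230075695 * (1000 * z11 + 623 * z12 - 84 * z13 + 171 * z14 + 166 * z15)^2
    + 1038329149 * (1000 * z12 + 7 * z13 - 9 * z14 - 63 * z15)^2
    + 1011364928 * (500 * z13 + 33 * z14 + 13 * z15)^2 + 178792013 * (1000 * z14 + 493 * z15)^2
    + 137465312000000 * z15^2 + 64827948147000 * z0^2 + 3557656185000 * (z0 - z1)^2
    + 3963056657000 * (z0 - z2)^2 + 2140096654000 * (z0 - z3)^2 + 69385506000 * (z0 + z4)^2
    + 3274088838000 * (z0 - z5)^2 + 1815840497000 * (z0 + z6)^2 + 1660671373000 * (z0 - z7)^2
    + 2490875774000 * (z0 + z8)^2 + 3327353436000 * (z0 - z9)^2 + 3945287158000 * (z0 + z10)^2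
    + 1210467930000 * (z0 + z11)^2 + 2133823393000 * (z0 + z12)^2 + 2315101055000 * (z0 - z13)^2
    + 2064437887000 * (z0 - z14)^2 + 3610042510000 * (z0 + z15)^2 + 77669467475625 * z1^2
    + 1604924760635 * (z1 - z2)^2 + 816037715030 * (z1 + z3)^2 + 3039190240170 * (z1 - z4)^2
    + 2303106259090 * (z1 - z5)^2 + 947659251835 * (z1 + z6)^2 + 312827078015 * (z1 - z7)^2
    + 912787140570 * (z1 + z8)^2 + 701007551020 * (z1 + z9)^2 + 735545431310 * (z1 - z10)^2
    + 320513796850 * (z1 - z11)^2 + 2241672058885 * (z1 - z12)^2 + 68491851525 * (z1 - z13)^2
    + 83502282715 * (z1 + z14)^2 + 3144299739050 * (z1 + z15)^2 + 74933498507163 * z2^2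
    + 4142714508570 * (z2 + z3)^2 + 1506133529922 * (z2 - z4)^2 + 607326699050 * (z2 + z5)^2
    + 728536631075 * (z2 + z6)^2 + 954610213709 * (z2 + z7)^2 + 2607729090622 * (z2 + z8)^2
    + 1695380828252 * (z2 - z9)^2 + 3318619129734 * (z2 - z10)^2 + 53962829494 * (z2 - z11)^2
    + 784807987193 * (z2 - z12)^2 + 914006862287 * (z2 + z13)^2 + 1581513256297 * (z2 - z14)^2
    + 981760190042 * (z2 - z15)^2 + 53190322243568 * z3^2 + 735370470912 * (z3 - z4)^2
    + 1012871149366 * (z3 + z5)^2 + 1961106586238 * (z3 - z6)^2 + 3402660525820 * (z3 + z7)^2
    + 5942067277006 * (z3 - z8)^2 + 7591409242844 * (z3 + z9)^2 + 4553670562032 * (z3 - z10)^2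
    + 983042468186 * (z3 - z11)^2 + 3987683327344 * (z3 - z12)^2 + 6320964210940 * (z3 + z13)^2
    + 5268440277208 * (z3 + z14)^2 + 4313257127314 * (z3 - z15)^2 + 83806367897550 * z4^2
    + 3298112333384 * (z4 - z5)^2 + 544326554670 * (z4 + z6)^2 + 532525225046 * (z4 - z7)^2
    + 733138394864 * (z4 - z8)^2 + 1756061894914 * (z4 + z9)^2 + 2254895969188 * (z4 + z10)^2
    + 26441459646 * (z4 - z11)^2 + 536753215888 * (z4 + z12)^2 + 757867252086 * (z4 + z13)^2
    + 587453947234 * (z4 + z14)^2 + 2175590336718 * (z4 + z15)^2 + 75382510972095 * z5^2
    + 1068566052679 * (z5 + z6)^2 + 745854961400 * (z5 + z7)^2 + 1103812812437 * (z5 - z8)^2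
    + 1241865499233 * (z5 + z9)^2 + 1809634121254 * (z5 - z10)^2 + 254024368848 * (z5 + z11)^2
    + 4122739695063 * (z5 - z12)^2 + 966232328545 * (z5 + z13)^2 + 2240574524171 * (z5 + z14)^2
    + 2033863865302 * (z5 + z15)^2 + 86516440270140 * z6^2 + 619402127451 * (z6 - z7)^2
    + 1063307758939 * (z6 + z8)^2 + 2577227875035 * (z6 - z9)^2 + 1987711059648 * (z6 + z10)^2
    + 1164899941456 * (z6 + z11)^2 + 164601177270 * (z6 + z12)^2 + 1761197309558 * (z6 - z13)^2
    + 32032681474 * (z6 + z14)^2 + 960324910436 * (z6 + z15)^2 + 83761264396863 * z7^2
    + 842388997171 * (z7 - z8)^2 + 1794907503982 * (z7 + z9)^2 + 2322519401696 * (z7 - z10)^2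
    + 110462544761 * (z7 - z11)^2 + 1671185373751 * (z7 - z12)^2 + 2656554315966 * (z7 + z13)^2
    + 1567862699755 * (z7 + z14)^2 + 1495343149192 * (z7 - z15)^2 + 67873084191922 * z8^2
    + 668460872329 * (z8 + z9)^2 + 3539045409881 * (z8 + z10)^2 + 995064216419 * (z8 + z11)^2
    + 2011447978102 * (z8 - z12)^2 + 2282790276366 * (z8 - z13)^2 + 2785961251112 * (z8 + z14)^2
    + 3417508888705 * (z8 + z15)^2 + 56867753974778 * z9^2 + 5823226491564 * (z9 - z10)^2
    + 1811792806809 * (z9 - z11)^2 + 2766346380940 * (z9 + z12)^2 + 5237798389998 * (z9 + z13)^2
    + 2200846249008 * (z9 - z14)^2 + 7692252664833 * (z9 - z15)^2 + 59745444797704 * z10^2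
    + 1110444125888 * (z10 + z11)^2 + 5173161739277 * (z10 + z12)^2 + 4964461488196 * (z10 - z13)^2
    + 3800142203627 * (z10 - z14)^2 + 3463374266705 * (z10 + z15)^2 + 90691690698758 * z11^2
    + 394827050539 * (z11 + z12)^2 + 1522325454073 * (z11 - z13)^2 + 399592236300 * (z11 - z14)^2
    + 1545489062785 * (z11 + z15)^2 + 72733071201195 * z12^2 + 215440009732 * (z12 - z13)^2
    + 1594193796284 * (z12 + z14)^2 + 3501601904608 * (z12 + z15)^2 + 71363541978402 * z13^2
    + 1708886377738 * (z13 + z14)^2 + 5398608619237 * (z13 - z15)^2 + 70700179476975 * z14^2
    + 3511894574718 * (z14 - z15)^2 + 55726579417211 * z15^2) / 100000000"
  unfolding gram_lo_0_def by algebra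

definition gram_lo_1 ::
  "real \<Rightarrow> real \<Rightarrow> real \<Rightarrow> real \<Rightarrow> real \<Rightarrow>
   real \<Rightarrow> real \<Rightarrow> real \<Rightarrow> real \<Rightarrow> real \<Rightarrow>
   real" where
  "gram_lo_1 z0 z1 z2 z3 z4 z5 z6 z7 z8 z9 =
     16947840 * z0^2 + 49631400 * z1^2 + 8910720 * z2^2 + 53562600 * z3^2 + 9828000 * z4^2
     + 168058800 * z5^2 + 4520880 * z6^2 + 33415200 * z7^2 + 13759200 * z8^2 + 59950800 * z9^2
     + 15724800 * z0 * z1 + 16816800 * z0 * z2 - 26535600 * z0 * z3 - 7862400 * z0 * z4
     + 83538000 * z0 * z5 + 11802960 * z0 * z6 + 31449600 * z0 * z7 + 19656000 * z0 * z8
     + 51105600 * z0 * z9 + 15724800 * z1 * z2 - 80589600 * z1 * z3 + 22604400 * z1 * z4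
     + 49140000 * z1 * z5 + 5896800 * z1 * z6 + 54054000 * z1 * z7 - 8845200 * z1 * z8
     + 40294800 * z1 * z9 - 22604400 * z2 * z3 - 1965600 * z2 * z4 + 49140000 * z2 * z5
     + 6739200 * z2 * z6 + 20638800 * z2 * z7 + 9828000 * z2 * z8 + 30466800 * z2 * z9
     - 9828000 * z3 * z4 - 118918800 * z3 * z5 - 13759200 * z3 * z6 - 70761600 * z3 * z7
     - 6879600 * z3 * z8 - 75675600 * z3 * z9 - 28501200 * z4 * z5 - 3931200 * z4 * z6
     + 1965600 * z4 * z7 - 12776400 * z4 * z8 - 12776400 * z4 * z9 + 41277600 * z5 * z6
     + 121867200 * z5 * z7 + 67813200 * z5 * z8 + 192628800 * z5 * z9 + 15724800 * z6 * z7
     + 8845200 * z6 * z8 + 24570000 * z6 * z9 + 16707600 * z7 * z8 + 75675600 * z7 * z9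
     + 38329200 * z8 * z9"

lemma gram_lo_1_sos:
  "gram_lo_1 z0 z1 z2 z3 z4 z5 z6 z7 z8 z9 =
   (1590875122 * (1000 * z0 + 494 * z1 + 529 * z2 - 834 * z3 - 247 * z4 + 2626 * z5 + 371 * z6
    + 988 * z7 + 618 * z8 + 1606 * z9)^2
    + 4470656727 * (1000 * z1 + 83 * z2 - 755 * z3 + 296 * z4 + 88 * z5 + z6 + 431 * z7 - 208 * z8
    + 168 * z9)^2
    + 312011379 * (1000 * z2 - 478 * z3 - z4 + 695 * z5 + 79 * z6 + 132 * z7 + 157 * z8
    + 354 * z9)^2
    + 1528455749 * (1000 * z3 + 118 * z4 - 1349 * z5 - 119 * z6 - 493 * z7 - 132 * z8 - 676 * z9)^2
    + 368113523 * (1000 * z4 - 723 * z5 - 82 * z6 + 14 * z7 - 264 * z8 - 294 * z9)^2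
    + 2575196722 * (1000 * z5 + 89 * z6 + 293 * z7 + 200 * z8 + 508 * z9)^2
    + 82678236 * (1000 * z6 + 506 * z7 - 43 * z8 + 276 * z9)^2
    + 234941715 * (1000 * z7 + 43 * z8 + 75 * z9)^2 + 308403622 * (1000 * z8 + 163 * z9)^2
    + 211591478000000 * z9^2 + 100449052554000 * z0^2 + 347689732000 * (z0 + z1)^2
    + 732939538000 * (z0 - z2)^2 + 9851748000 * (z0 + z3)^2 + 173844866000 * (z0 - z4)^2
    + 738070372000 * (z0 - z5)^2 + 66670262000 * (z0 - z6)^2 + 695379464000 * (z0 + z7)^2
    + 360825396000 * (z0 - z8)^2 + 334554068000 * (z0 + z9)^2 + 95558090928180 * z1^2
    + 561540472772 * (z1 - z2)^2 + 1300015648512 * (z1 + z3)^2 + 1021009444196 * (z1 + z4)^2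
    + 170998739768 * (z1 - z5)^2 + 1196703836428 * (z1 - z6)^2 + 614651881784 * (z1 - z7)^2
    + 1955151470376 * (z1 + z8)^2 + 1526619573592 * (z1 + z9)^2 + 95845824633104 * z2^2
    + 946974534147 * (z2 + z3)^2 + 65432975950 * (z2 + z4)^2 + 2472124365796 * (z2 - z5)^2
    + 283524017939 * (z2 - z6)^2 + 648369386515 * (z2 - z7)^2 + 496445402556 * (z2 - z8)^2
    + 1017006465316 * (z2 - z9)^2 + 94866862066490 * z3^2 + 521647852958 * (z3 - z4)^2
    + 780689250718 * (z3 + z5)^2 + 1322788652191 * (z3 + z6)^2 + 777780002843 * (z3 + z7)^2
    + 924439211382 * (z3 - z8)^2 + 134756947316 * (z3 + z9)^2 + 101870575777694 * z4^2
    + 30505031711 * (z4 + z5)^2 + 427757424079 * (z4 - z6)^2 + 33720409006 * (z4 - z7)^2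
    + 308299845675 * (z4 + z8)^2 + 192393401346 * (z4 + z9)^2 + 94560712553142 * z5^2
    + 70856910720 * (z5 + z6)^2 + 349804692461 * (z5 + z7)^2 + 805515453461 * (z5 - z8)^2
    + 987451547772 * (z5 - z9)^2 + 99927774888353 * z6^2 + 308513366178 * (z6 - z7)^2
    + 306111288767 * (z6 + z8)^2 + 59896587874 * (z6 + z9)^2 + 98624219876387 * z7^2
    + 1021067616224 * (z7 + z8)^2 + 862962874408 * (z7 + z9)^2 + 96493342861036 * z8^2
    + 259527002913 * (z8 - z9)^2 + 98926091950470 * z9^2) / 100000000"
  unfolding gram_lo_1_def by algebra

definition gram_lo_2 ::
  "real \<Rightarrow> real \<Rightarrow> real \<Rightarrow> real \<Rightarrow> real \<Rightarrow>
   real \<Rightarrow> real \<Rightarrow> real \<Rightarrow> real \<Rightarrow> real \<Rightarrow>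
   real" where
  "gram_lo_2 z0 z1 z2 z3 z4 z5 z6 z7 z8 z9 =
     49631400 * z0^2 + 16947840 * z1^2 + 8910720 * z2^2 + 168058800 * z3^2 + 33415200 * z4^2
     + 4520880 * z5^2 + 59950800 * z6^2 + 53562600 * z7^2 + 9828000 * z8^2 + 13759200 * z9^2
     + 15724800 * z0 * z1 + 15724800 * z0 * z2 + 49140000 * z0 * z3 + 54054000 * z0 * z4
     + 5896800 * z0 * z5 + 40294800 * z0 * z6 - 80589600 * z0 * z7 + 22604400 * z0 * z8
     - 8845200 * z0 * z9 + 16816800 * z1 * z2 + 83538000 * z1 * z3 + 31449600 * z1 * z4
     + 11802960 * z1 * z5 + 51105600 * z1 * z6 - 26535600 * z1 * z7 - 7862400 * z1 * z8
     + 19656000 * z1 * z9 + 49140000 * z2 * z3 + 20638800 * z2 * z4 + 6739200 * z2 * z5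
     + 30466800 * z2 * z6 - 22604400 * z2 * z7 - 1965600 * z2 * z8 + 9828000 * z2 * z9
     + 121867200 * z3 * z4 + 41277600 * z3 * z5 + 192628800 * z3 * z6 - 118918800 * z3 * z7
     - 28501200 * z3 * z8 + 67813200 * z3 * z9 + 15724800 * z4 * z5 + 75675600 * z4 * z6
     - 70761600 * z4 * z7 + 1965600 * z4 * z8 + 16707600 * z4 * z9 + 24570000 * z5 * z6
     - 13759200 * z5 * z7 - 3931200 * z5 * z8 + 8845200 * z5 * z9 - 75675600 * z6 * z7
     - 12776400 * z6 * z8 + 38329200 * z6 * z9 - 9828000 * z7 * z8 - 6879600 * z7 * z9
     - 12776400 * z8 * z9"

lemma gram_lo_2_sos:
  "gram_lo_2 z0 z1 z2 z3 z4 z5 z6 z7 z8 z9 =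
   (4859231122 * (1000 * z0 + 162 * z1 + 162 * z2 + 506 * z3 + 556 * z4 + 61 * z5 + 415 * z6
    - 829 * z7 + 233 * z8 - 91 * z9)^2
    + 1463658835 * (1000 * z1 + 488 * z2 + 2582 * z3 + 776 * z4 + 371 * z5 + 1523 * z6 - 461 * z7
    - 394 * z8 + 720 * z9)^2
    + 312011379 * (1000 * z2 + 695 * z3 + 132 * z4 + 79 * z5 + 354 * z6 - 478 * z7 - z8
    + 157 * z9)^2
    + 5550254863 * (1000 * z3 + 318 * z4 + 90 * z5 + 501 * z6 - 372 * z7 - 92 * z8 + 155 * z9)^2
    + 285971287 * (1000 * z4 + 140 * z5 + 121 * z6 - 340 * z7 + 274 * z8 - 56 * z9)^2
    + 77182159 * (1000 * z5 + 228 * z6 + 217 * z7 - 221 * z8 - z9)^2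
    + 220988991 * (1000 * z6 + 38 * z7 + 87 * z8 + 222 * z9)^2
    + 11601209984 * (250 * z7 + 7 * z8 + 38 * z9)^2 + 20164942848 * (125 * z8 - 18 * z9)^2
    + 296955103000000 * z9^2 + 92617317314000 * z0^2 + 955441764000 * (z0 - z1)^2
    + 955441764000 * (z0 - z2)^2 + 1770947732000 * (z0 - z3)^2 + 967496168000 * (z0 + z4)^2
    + 1573098442000 * (z0 - z5)^2 + 1840915630000 * (z0 - z6)^2 + 1177399862000 * (z0 - z7)^2
    + 1980851426000 * (z0 - z8)^2 + 69967898000 * (z0 - z9)^2 + 97360886554564 * z1^2
    + 951173045768 * (z1 - z2)^2 + 588005502584 * (z1 - z3)^2 + 999921580784 * (z1 - z4)^2
    + 888349732604 * (z1 - z5)^2 + 558514037060 * (z1 - z6)^2 + 551744157356 * (z1 + z7)^2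
    + 145043058988 * (z1 + z8)^2 + 600424000524 * (z1 + z9)^2 + 94102266040412 * z2^2
    + 2402352578944 * (z2 - z3)^2 + 1196204557264 * (z2 - z4)^2 + 700325647684 * (z2 - z5)^2
    + 1624510482100 * (z2 - z6)^2 + 782861176636 * (z2 + z7)^2 + 36084971108 * (z2 + z8)^2
    + 222169568076 * (z2 - z9)^2 + 85538438893270 * z3^2 + 44703828828 * (z3 + z4)^2
    + 4829948786517 * (z3 - z5)^2 + 2063300777460 * (z3 - z6)^2 + 2925263541588 * (z3 + z7)^2
    + 1878506599029 * (z3 + z8)^2 + 926789759373 * (z3 - z9)^2 + 97155760255600 * z4^2
    + 2085135714184 * (z4 - z5)^2 + 698953625706 * (z4 - z6)^2 + 1250440502880 * (z4 - z7)^2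
    + 344542591340 * (z4 + z8)^2 + 561600386154 * (z4 - z9)^2 + 86149019212835 * z5^2
    + 2955566221549 * (z5 - z6)^2 + 2565904082541 * (z5 + z7)^2 + 392772344565 * (z5 + z8)^2
    + 715691470485 * (z5 - z9)^2 + 88500243414086 * z6^2 + 2361619468155 * (z6 + z7)^2
    + 717414041036 * (z6 + z8)^2 + 471095622633 * (z6 - z9)^2 + 90926013532494 * z7^2
    + 553035945127 * (z7 + z8)^2 + 1201102497603 * (z7 + z9)^2 + 95196607149932 * z8^2
    + 1004540276120 * (z8 + z9)^2 + 98082147700921 * z9^2) / 100000000"
  unfolding gram_lo_2_def by algebra

definition gram_lo_3 ::
  "real \<Rightarrow> real \<Rightarrow> real \<Rightarrow> real \<Rightarrow> real \<Rightarrow>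
   real \<Rightarrow> real \<Rightarrow> real \<Rightarrow> real" where
  "gram_lo_3 z0 z1 z2 z3 z4 z5 z6 z7 =
     14796600 * z0^2 + 14796600 * z1^2 + 1572480 * z2^2 + 47665800 * z3^2 + 3046680 * z4^2
     + 47665800 * z5^2 + 3046680 * z6^2 + 4422600 * z7^2 + 12776400 * z0 * z1 + 131040 * z0 * z2
     + 12776400 * z0 * z3 + 1965600 * z0 * z4 - 5896800 * z0 * z5 + 3790800 * z0 * z6
     + 5896800 * z0 * z7 + 131040 * z1 * z2 - 5896800 * z1 * z3 + 3790800 * z1 * z4
     + 12776400 * z1 * z5 + 1965600 * z1 * z6 + 5896800 * z1 * z7 + 5896800 * z3 * z4
     - 81572400 * z3 * z5 - 2948400 * z3 * z6 + 982800 * z3 * z7 - 2948400 * z4 * z5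
     + 982800 * z4 * z7 + 5896800 * z5 * z6 + 982800 * z5 * z7 + 982800 * z6 * z7"

lemma gram_lo_3_sos:
  "gram_lo_3 z0 z1 z2 z3 z4 z5 z6 z7 =
   (1385358999 * (100 * z0 + 46 * z1 + 46 * z3 + 7 * z4 - 21 * z5 + 14 * z6 + 21 * z7)^2
    + 1090784818 * (100 * z1 - 54 * z3 + 13 * z4 + 71 * z5 + z6 + 15 * z7)^2
    + 62904583 * (100 * z2 - 2 * z3 - z4 - 2 * z5 - z6 - 3 * z7)^2
    + 4059190509 * (100 * z3 + 8 * z4 - 87 * z5 - 6 * z6)^2
    + 157899873 * (100 * z4 + 35 * z5 + 2 * z6 + 5 * z7)^2 + 980401770 * (100 * z5 + 13 * z6)^2
    + 3868976675 * (20 * z6 + z7)^2 + 2612867650000 * z7^2 + 710949297300 * z0^2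
    + 15548604600 * (z0 + z1)^2 + 65520000000 * (z0 + z2)^2 + 15548604600 * (z0 + z3)^2
    + 13048700700 * (z0 + z4)^2 + 39146102100 * (z0 - z5)^2 + 44102598600 * (z0 - z6)^2
    + 39146102100 * (z0 + z7)^2 + 771951947322 * z1^2 + 65520000000 * (z1 + z2)^2
    + 10418375316 * (z1 + z3)^2 + 31294138922 * (z1 + z4)^2 + 18115414766 * (z1 - z5)^2
    + 18449677156 * (z1 - z6)^2 + 26034020034 * (z1 - z7)^2 + 755780045300 * z2^2
    + 12580916600 * (z2 + z3)^2 + 6290458300 * (z2 + z4)^2 + 12580916600 * (z2 + z5)^2
    + 6290458300 * (z2 + z6)^2 + 18871374900 * (z2 + z7)^2 + 689327337476 * z3^2
    + 20567128192 * (z3 + z4)^2 + 48831595214 * (z3 + z5)^2 + 127919681050 * (z3 + z6)^2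
    + 36301482048 * (z3 + z7)^2 + 862136793646 * z4^2 + 4925384563 * (z4 - z5)^2
    + 13252880713 * (z4 + z6)^2 + 4089462612 * (z4 - z7)^2 + 497200234052 * z5^2
    + 126348723346 * (z5 - z6)^2 + 87352417884 * (z5 - z7)^2 + 566186336729 * z6^2
    + 11404563955 * (z6 - z7)^2 + 721780409111 * z7^2) / 1000000"
  unfolding gram_lo_3_def by algebra

definition gram_lo_4 ::
  "real \<Rightarrow> real \<Rightarrow> real \<Rightarrow> real \<Rightarrow> real \<Rightarrow>
   real \<Rightarrow> real \<Rightarrow> real \<Rightarrow> real \<Rightarrow> real \<Rightarrow>
   real" where
  "gram_lo_4 z0 z1 z2 z3 z4 z5 z6 z7 z8 z9 =
     10679760 * z0^2 + 8615880 * z1^2 + 5012280 * z2^2 + 24144120 * z3^2 + 36527400 * z4^2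
     + 21411000 * z5^2 + 10445760 * z6^2 + 11891880 * z7^2 + 26208000 * z8^2 + 19656000 * z9^2
     + 5724810 * z0 * z1 - 884520 * z0 * z2 + 393120 * z0 * z3 + 9664200 * z0 * z4
     - 17120376 * z0 * z5 + 13366080 * z0 * z6 - 90090 * z0 * z7 - 8906040 * z0 * z8
     - 12634440 * z0 * z9 - 327600 * z1 * z2 - 7796880 * z1 * z3 + 13719888 * z1 * z4
     - 14171976 * z1 * z5 + 7772310 * z1 * z6 + 9434880 * z1 * z7 - 12634440 * z1 * z8
     - 6940440 * z1 * z9 + 2784600 * z2 * z3 + 9205560 * z2 * z4 + 892710 * z2 * z5
     - 2457000 * z2 * z6 + 491400 * z2 * z7 + 3982160 * z2 * z8 + 2016560 * z2 * z9
     + 9762480 * z3 * z4 + 22183200 * z3 * z5 - 6940440 * z3 * z6 - 840840 * z3 * z7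
     + 39452400 * z3 * z8 + 23466240 * z3 * z9 - 19514040 * z4 * z5 + 10861760 * z4 * z6
     + 18925920 * z4 * z7 + 221130 * z4 * z8 - 3970512 * z4 * z9 - 19514040 * z5 * z6
     - 3009240 * z5 * z7 + 32311440 * z5 * z8 + 30607200 * z5 * z9 + 2999360 * z6 * z7
     - 15764112 * z6 * z8 - 13538070 * z6 * z9 - 1022112 * z7 * z8 + 8255520 * z7 * z9
     + 32760000 * z8 * z9"

lemma gram_lo_4_sos:
  "gram_lo_4 z0 z1 z2 z3 z4 z5 z6 z7 z8 z9 =
   (913013725 * (100 * z0 + 31 * z1 - 5 * z2 + 2 * z3 + 53 * z4 - 94 * z5 + 73 * z6 - 49 * z8
    - 69 * z9)^2
    + 616885974 * (100 * z1 - 64 * z3 + 87 * z4 - 71 * z5 + 29 * z6 + 77 * z7 - 80 * z8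
    - 24 * z9)^2
    + 344113186 * (100 * z2 + 40 * z3 + 141 * z4 - 26 * z6 + 8 * z7 + 51 * z8 + 20 * z9)^2
    + 1949013881 * (100 * z3 + 32 * z4 + 43 * z5 - 11 * z6 + 13 * z7 + 82 * z8 + 55 * z9)^2
    + 1892368630 * (100 * z4 - 22 * z5 + 12 * z6 + 22 * z7 - 5 * z8 - 9 * z9)^2
    + 412943188 * (100 * z5 - 19 * z6 + 40 * z7 + 33 * z8 + 81 * z9)^2
    + 259327027 * (100 * z6 + 12 * z7 - 25 * z8 + 18 * z9)^2
    + 472636815 * (100 * z7 + 16 * z8 + 59 * z9)^2 + 153085325600 * (5 * z8 + 2 * z9)^2
    + 2225151320000 * z9^2 + 1359085065000 * z0^2 + 32062452500 * (z0 + z1)^2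
    + 14246862500 * (z0 + z2)^2 + 13957255000 * (z0 + z3)^2 + 6872742500 * (z0 - z4)^2
    + 22141015000 * (z0 + z5)^2 + 18039807500 * (z0 + z6)^2 + 45045000000 * (z0 - z7)^2
    + 20747252500 * (z0 + z8)^2 + 17425297500 * (z0 - z9)^2 + 1350560453450 * z1^2
    + 22282872625 * (z1 - z2)^2 + 6976617350 * (z1 - z3)^2 + 7045523975 * (z1 - z4)^2
    + 45575589950 * (z1 - z5)^2 + 31035615725 * (z1 + z6)^2 + 32581999800 * (z1 - z7)^2
    + 4735640275 * (z1 + z8)^2 + 36757304625 * (z1 - z9)^2 + 1414685296550 * z2^2
    + 24977393250 * (z2 + z3)^2 + 7267285475 * (z2 - z4)^2 + 17238549250 * (z2 + z5)^2
    + 555706775 * (z2 - z6)^2 + 29590548800 * (z2 - z7)^2 + 12414388775 * (z2 + z8)^2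
    + 5063892875 * (z2 + z9)^2 + 1228648982944 * z3^2 + 41638860142 * (z3 + z4)^2
    + 79357026144 * (z3 + z5)^2 + 43213346434 * (z3 + z6)^2 + 24240184948 * (z3 - z7)^2
    + 26685565470 * (z3 - z8)^2 + 83287856314 * (z3 - z9)^2 + 1147476041746 * z4^2
    + 83486925092 * (z4 + z5)^2 + 18756055561 * (z4 + z6)^2 + 31719574130 * (z4 - z7)^2
    + 132641993595 * (z4 + z8)^2 + 55838742043 * (z4 - z9)^2 + 1273760203918 * z5^2
    + 15690657351 * (z5 - z6)^2 + 42530525299 * (z5 + z7)^2 + 3370436224 * (z5 + z8)^2
    + 1672639849 * (z5 + z9)^2 + 1366757280706 * z6^2 + 24482780111 * (z6 - z7)^2
    + 50049223479 * (z6 + z8)^2 + 9633244774 * (z6 - z9)^2 + 1245526271054 * z7^2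
    + 55569368046 * (z7 + z8)^2 + 11343458565 * (z7 + z9)^2 + 1072502803265 * z8^2
    + 81647504419 * (z8 - z9)^2 + 1188367681201 * z9^2) / 1000000"
  unfolding gram_lo_4_def by algebra

definition gram_lo_5 ::
  "real \<Rightarrow> real \<Rightarrow> real \<Rightarrow> real \<Rightarrow> real \<Rightarrow>
   real \<Rightarrow> real \<Rightarrow> real" where
  "gram_lo_5 z0 z1 z2 z3 z4 z5 z6 =
     3177720 * z0^2 + 9336600 * z1^2 + 1474200 * z2^2 + 12285000 * z3^2 + 36363600 * z4^2
     + 4914000 * z5^2 + 8910720 * z6^2 + 131040 * z0 * z2 + 1965600 * z0 * z3 + 982800 * z0 * z4
     + 982800 * z0 * z5 + 5896800 * z1 * z3 + 25552800 * z1 * z4 - 4914000 * z1 * z5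
     + 11793600 * z1 * z6 + 16707600 * z3 * z4 + 982800 * z3 * z5 + 2948400 * z3 * z6
     - 9828000 * z4 * z5 + 26535600 * z4 * z6 - 3931200 * z5 * z6"

lemma gram_lo_5_sos:
  "gram_lo_5 z0 z1 z2 z3 z4 z5 z6 =
   (229486424 * (100 * z0 + 3 * z2 + 43 * z3 + 21 * z4 + 21 * z5)^2
    + 845374424 * (100 * z1 + 35 * z3 + 151 * z4 - 29 * z5 + 70 * z6)^2
    + 58947360 * (100 * z2 - 5 * z3 - 2 * z4 - 2 * z5)^2
    + 995160487 * (100 * z3 + 37 * z4 + 11 * z5 - 6 * z6)^2
    + 1470005643 * (100 * z4 - 12 * z5 + 31 * z6)^2 + 4605627936 * (25 * z5 + 3 * z6)^2
    + 2415787210000 * z6^2 + 856581190400 * z0^2 + 3325927200 * (z0 - z2)^2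
    + 3991623200 * (z0 - z3)^2 + 9478509600 * (z0 + z4)^2 + 9478509600 * (z0 + z5)^2
    + 834963940000 * z1^2 + 10410484000 * (z1 - z3)^2 + 11246197600 * (z1 + z4)^2
    + 5414170400 * (z1 - z5)^2 + 20820968000 * (z1 - z6)^2 + 873868680864 * z2^2
    + 130068696 * (z2 - z3)^2 + 2668172712 * (z2 - z4)^2 + 2668172712 * (z2 - z5)^2
    + 806480111928 * z3^2 + 3913347212 * (z3 - z4)^2 + 46962790188 * (z3 + z5)^2
    + 128953400 * (z3 + z6)^2 + 847709811596 * z4^2 + 45431753663 * (z4 + z5)^2
    + 3899526866 * (z4 - z6)^2 + 763422042052 * z5^2 + 17610676858 * (z5 + z6)^2
    + 820186135397 * z6^2) / 1000000"
  unfolding gram_lo_5_def by algebra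

definition gram_lo_6 ::
  "real \<Rightarrow> real \<Rightarrow> real \<Rightarrow> real \<Rightarrow> real \<Rightarrow>
   real \<Rightarrow> real" where
  "gram_lo_6 z0 z1 z2 z3 z4 z5 =
     5896800 * z0^2 + 5410080 * z1^2 + 2948400 * z2^2 + 8353800 * z3^2 + 4422600 * z4^2
     + 5405400 * z5^2 - 982800 * z0 * z1 + 3931200 * z0 * z3 - 1965600 * z0 * z4
     + 3931200 * z0 * z5 - 140400 * z1 * z2 + 982800 * z1 * z3 + 1965600 * z1 * z4
     - 982800 * z1 * z5 + 982800 * z2 * z3 - 982800 * z3 * z4 + 1965600 * z3 * z5
     - 1965600 * z4 * z5"

lemma gram_lo_6_sos:
  "gram_lo_6 z0 z1 z2 z3 z4 z5 =
   (417118505 * (100 * z0 - 12 * z1 + 47 * z3 - 24 * z4 + 47 * z5)^2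
    + 362657408 * (100 * z1 - 2 * z2 + 20 * z3 + 24 * z4 - 7 * z5)^2
    + 122142618 * (100 * z2 + 41 * z3 + z4)^2 + 2139474492 * (50 * z3 - 2 * z4 + z5)^2
    + 89992648400 * (5 * z4 - z5)^2 + 2641325280000 * z5^2 + 1687902279000 * z0^2
    + 9142206000 * (z0 + z1)^2 + 5143026500 * (z0 + z3)^2 + 18284412000 * (z0 + z4)^2
    + 5143026500 * (z0 + z5)^2 + 1700634260640 * z1^2 + 2331481600 * (z1 + z2)^2
    + 1340020820 * (z1 + z3)^2 + 7707908640 * (z1 - z4)^2 + 2284977580 * (z1 - z5)^2
    + 1707799648752 * z2^2 + 5121562520 * (z2 + z3)^2 + 5193293784 * (z2 + z4)^2
    + 5077203712 * (z2 - z5)^2 + 1702552423920 * z3^2 + 13973719662 * (z3 + z4)^2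
    + 5183534975 * (z3 + z5)^2 + 1666915180272 * z4^2 + 2878309168 * (z4 + z5)^2
    + 1712190554636 * z5^2) / 1000000"
  unfolding gram_lo_6_def by algebra

definition gram_lo_7 :: "real \<Rightarrow> real \<Rightarrow> real \<Rightarrow> real \<Rightarrow> real" where
  "gram_lo_7 z0 z1 z2 z3 =
     8910720 * z0^2 + 10740600 * z1^2 + 48157200 * z2^2 + 4422600 * z3^2 + 7862400 * z0 * z1
     + 22604400 * z0 * z2 + 3931200 * z0 * z3 + 34398000 * z1 * z2 + 3931200 * z1 * z3
     + 8845200 * z2 * z3"

lemma gram_lo_7_sos:
  "gram_lo_7 z0 z1 z2 z3 =
   (684218280 * (100 * z0 + 57 * z1 + 165 * z2 + 29 * z3)^2
    + 641337813 * (100 * z1 + 167 * z2 + 13 * z3)^2 + 3819939268 * (50 * z2 - z3)^2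
    + 1675274700000 * z3^2 + 2006150004000 * z0^2 + 31155804000 * (z0 + z1)^2
    + 12598380000 * (z0 + z2)^2 + 18633012000 * (z0 - z3)^2 + 2018607248520 * z1^2
    + 53585599500 * (z1 + z2)^2 + 848026260 * (z1 + z3)^2 + 1974323012320 * z2^2
    + 52731898423 * (z2 - z3)^2 + 1987478760172 * z3^2) / 1000000"
  unfolding gram_lo_7_def by algebra

definition gram_lo_8 ::
  "real \<Rightarrow> real \<Rightarrow> real \<Rightarrow> real \<Rightarrow> real \<Rightarrow>
   real \<Rightarrow> real \<Rightarrow> real \<Rightarrow> real \<Rightarrow> real \<Rightarrow>
   real" where
  "gram_lo_8 z0 z1 z2 z3 z4 z5 z6 z7 z8 z9 =
     8615880 * z0^2 + 10679760 * z1^2 + 5012280 * z2^2 + 21411000 * z3^2 + 11891880 * z4^2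
     + 10445760 * z5^2 + 19656000 * z6^2 + 24144120 * z7^2 + 36527400 * z8^2 + 26208000 * z9^2
     + 5724810 * z0 * z1 - 327600 * z0 * z2 - 14171976 * z0 * z3 + 9434880 * z0 * z4
     + 7772310 * z0 * z5 - 6940440 * z0 * z6 - 7796880 * z0 * z7 + 13719888 * z0 * z8
     - 12634440 * z0 * z9 - 884520 * z1 * z2 - 17120376 * z1 * z3 - 90090 * z1 * z4
     + 13366080 * z1 * z5 - 12634440 * z1 * z6 + 393120 * z1 * z7 + 9664200 * z1 * z8
     - 8906040 * z1 * z9 + 892710 * z2 * z3 + 491400 * z2 * z4 - 2457000 * z2 * z5
     + 2016560 * z2 * z6 + 2784600 * z2 * z7 + 9205560 * z2 * z8 + 3982160 * z2 * z9
     - 3009240 * z3 * z4 - 19514040 * z3 * z5 + 30607200 * z3 * z6 + 22183200 * z3 * z7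
     - 19514040 * z3 * z8 + 32311440 * z3 * z9 + 2999360 * z4 * z5 + 8255520 * z4 * z6
     - 840840 * z4 * z7 + 18925920 * z4 * z8 - 1022112 * z4 * z9 - 13538070 * z5 * z6
     - 6940440 * z5 * z7 + 10861760 * z5 * z8 - 15764112 * z5 * z9 + 23466240 * z6 * z7
     - 3970512 * z6 * z8 + 32760000 * z6 * z9 + 9762480 * z7 * z8 + 39452400 * z7 * z9
     + 221130 * z8 * z9"

lemma gram_lo_8_sos:
  "gram_lo_8 z0 z1 z2 z3 z4 z5 z6 z7 z8 z9 =
   (706625725 * (100 * z0 + 41 * z1 - 2 * z2 - 100 * z3 + 67 * z4 + 55 * z5 - 49 * z6 - 55 * z7
    + 97 * z8 - 89 * z9)^2
    + 797063200 * (100 * z1 - 5 * z2 - 71 * z3 - 25 * z4 + 64 * z5 - 62 * z6 + 22 * z7 + 26 * z8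
    - 24 * z9)^2
    + 344113186 * (100 * z2 + 8 * z4 - 26 * z5 + 20 * z6 + 40 * z7 + 141 * z8 + 51 * z9)^2
    + 869392375 * (100 * z3 + 21 * z4 - 25 * z5 + 96 * z6 + 97 * z7 - 16 * z8 + 97 * z9)^2
    + 630817987 * (100 * z4 + 11 * z5 + 54 * z6 + 12 * z7 + 84 * z8 + 21 * z9)^2
    + 261278970 * (100 * z5 + 8 * z6 - z7 + 25 * z8 - 28 * z9)^2
    + 339367797 * (100 * z6 + 64 * z7 + 3 * z8 + 88 * z9)^2
    + 982921253 * (100 * z7 + 71 * z8 + 58 * z9)^2 + 4435683284 * (50 * z8 + 3 * z9)^2
    + 2999198310000 * z9^2 + 1401739852500 * z0^2 + 34760472500 * (z0 - z1)^2
    + 22474855000 * (z0 - z2)^2 + 19730750000 * (z0 - z3)^2 + 16952357500 * (z0 - z4)^2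
    + 286487500 * (z0 - z5)^2 + 7753947500 * (z0 - z6)^2 + 11998512500 * (z0 - z7)^2
    + 5674467500 * (z0 + z8)^2 + 28251047500 * (z0 - z9)^2 + 1280754673275 * z1^2
    + 14214909450 * (z1 + z2)^2 + 3873807500 * (z1 - z3)^2 + 6512133425 * (z1 + z4)^2
    + 11605489875 * (z1 - z5)^2 + 44182921525 * (z1 + z6)^2 + 36461969875 * (z1 + z7)^2
    + 50514828325 * (z1 - z8)^2 + 38408950525 * (z1 + z9)^2 + 1401382411850 * z2^2
    + 22072419000 * (z2 + z3)^2 + 34535601650 * (z2 - z4)^2 + 1016662650 * (z2 - z5)^2
    + 3714714950 * (z2 + z6)^2 + 25795378250 * (z2 + z7)^2 + 8512315950 * (z2 - z8)^2
    + 14675788350 * (z2 + z9)^2 + 1354601658300 * z3^2 + 10738810000 * (z3 - z4)^2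
    + 75242394200 * (z3 - z5)^2 + 13705058900 * (z3 - z6)^2 + 17065193400 * (z3 + z7)^2
    + 40344000300 * (z3 - z8)^2 + 75449317200 * (z3 + z9)^2 + 1398003626157 * z4^2
    + 5172077238 * (z4 + z5)^2 + 2005972385 * (z4 - z6)^2 + 16169515170 * (z4 - z7)^2
    + 6224433383 * (z4 - z8)^2 + 11752942288 * (z4 - z9)^2 + 1358096776523 * z5^2
    + 20180397083 * (z5 - z6)^2 + 45928021944 * (z5 - z7)^2 + 12407337213 * (z5 + z8)^2
    + 48401245911 * (z5 - z9)^2 + 1340285876019 * z6^2 + 33748193491 * (z6 - z7)^2
    + 7732930673 * (z6 + z8)^2 + 22340204377 * (z6 + z9)^2 + 1295542332403 * z7^2
    + 69565380535 * (z7 - z8)^2 + 27468045922 * (z7 + z9)^2 + 1264098213731 * z8^2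
    + 149471594731 * (z8 - z9)^2 + 1203574619747 * z9^2) / 1000000"
  unfolding gram_lo_8_def by algebra

definition gram_lo_9 ::
  "real \<Rightarrow> real \<Rightarrow> real \<Rightarrow> real \<Rightarrow> real \<Rightarrow>
   real \<Rightarrow> real" where
  "gram_lo_9 z0 z1 z2 z3 z4 z5 =
     5410080 * z0^2 + 5896800 * z1^2 + 2948400 * z2^2 + 4422600 * z3^2 + 5405400 * z4^2
     + 8353800 * z5^2 - 982800 * z0 * z1 - 140400 * z0 * z2 + 1965600 * z0 * z3 - 982800 * z0 * z4
     + 982800 * z0 * z5 - 1965600 * z1 * z3 + 3931200 * z1 * z4 + 3931200 * z1 * z5
     + 982800 * z2 * z5 - 1965600 * z3 * z4 - 982800 * z3 * z5 + 1965600 * z4 * z5"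

lemma gram_lo_9_sos:
  "gram_lo_9 z0 z1 z2 z3 z4 z5 =
   (368446505 * (100 * z0 - 13 * z1 - 2 * z2 + 27 * z3 - 13 * z4 + 13 * z5)^2
    + 410564665 * (100 * z1 - 21 * z3 + 46 * z4 + 49 * z5)^2
    + 122142618 * (100 * z2 + z3 + 41 * z5)^2 + 225790944 * (100 * z3 - 20 * z4 - 9 * z5)^2
    + 264219978 * (100 * z4 + 3 * z5)^2 + 5327750500000 * z5^2 + 1672861455000 * z0^2
    + 12419543500 * (z0 - z1)^2 + 3489301000 * (z0 + z2)^2 + 12005563500 * (z0 - z3)^2
    + 12419543500 * (z0 - z4)^2 + 12419543500 * (z0 + z5)^2 + 1667340535770 * z1^2
    + 9579609130 * (z1 - z2)^2 + 8710519755 * (z1 + z3)^2 + 14735081655 * (z1 + z4)^2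
    + 16100600845 * (z1 + z5)^2 + 1694974789920 * z2^2 + 7681849470 * (z2 + z3)^2
    + 9579609130 * (z2 - z4)^2 + 194875330 * (z2 + z5)^2 + 1681176362184 * z3^2
    + 5287922355 * (z3 - z4)^2 + 49680708 * (z3 - z5)^2 + 1699585736390 * z4^2
    + 253658885 * (z4 - z5)^2 + 1723009133598 * z5^2) / 1000000"
  unfolding gram_lo_9_def by algebra

definition gram_lo_10 ::
  "real \<Rightarrow> real \<Rightarrow> real \<Rightarrow> real \<Rightarrow> real \<Rightarrow>
   real \<Rightarrow> real \<Rightarrow> real" where
  "gram_lo_10 z0 z1 z2 z3 z4 z5 z6 =
     9336600 * z0^2 + 3177720 * z1^2 + 1474200 * z2^2 + 4914000 * z3^2 + 8910720 * z4^2
     + 12285000 * z5^2 + 36363600 * z6^2 - 4914000 * z0 * z3 + 11793600 * z0 * z4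
     + 5896800 * z0 * z5 + 25552800 * z0 * z6 + 131040 * z1 * z2 + 982800 * z1 * z3
     + 1965600 * z1 * z5 + 982800 * z1 * z6 - 3931200 * z3 * z4 + 982800 * z3 * z5
     - 9828000 * z3 * z6 + 2948400 * z4 * z5 + 26535600 * z4 * z6 + 16707600 * z5 * z6"

lemma gram_lo_10_sos:
  "gram_lo_10 z0 z1 z2 z3 z4 z5 z6 =
   (845374424 * (100 * z0 - 29 * z3 + 70 * z4 + 35 * z5 + 151 * z6)^2
    + 229486424 * (100 * z1 + 3 * z2 + 21 * z3 + 43 * z5 + 21 * z6)^2
    + 58947360 * (100 * z2 - 2 * z3 - 5 * z5 - 2 * z6)^2
    + 321148311 * (100 * z3 - 8 * z4 + 35 * z5 - 41 * z6)^2
    + 389489259 * (100 * z4 - 13 * z5 + 109 * z6)^2 + 948644027 * (100 * z5 + 49 * z6)^2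
    + 8573048230000 * z6^2 + 834963940000 * z0^2 + 5414170400 * (z0 - z3)^2
    + 20820968000 * (z0 - z4)^2 + 10410484000 * (z0 - z5)^2 + 11246197600 * (z0 + z6)^2
    + 856581190400 * z1^2 + 3325927200 * (z1 - z2)^2 + 9478509600 * (z1 + z3)^2
    + 3991623200 * (z1 - z5)^2 + 9478509600 * (z1 + z6)^2 + 873868680864 * z2^2
    + 2668172712 * (z2 - z3)^2 + 130068696 * (z2 - z5)^2 + 2668172712 * (z2 - z6)^2
    + 844344502000 * z3^2 + 7428729520 * (z3 + z4)^2 + 17620237388 * (z3 + z5)^2
    + 3163375372 * (z3 + z6)^2 + 805402537168 * z4^2 + 709775020 * (z4 - z5)^2
    + 18577230788 * (z4 - z6)^2 + 802510595898 * z5^2 + 42578828676 * (z5 + z6)^2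
    + 880951405407 * z6^2) / 1000000"
  unfolding gram_lo_10_def by algebra

definition gram_lo_11 :: "real \<Rightarrow> real \<Rightarrow> real \<Rightarrow> real \<Rightarrow> real" where
  "gram_lo_11 z0 z1 z2 z3 =
     10740600 * z0^2 + 8910720 * z1^2 + 4422600 * z2^2 + 48157200 * z3^2 + 7862400 * z0 * z1
     + 3931200 * z0 * z2 + 34398000 * z0 * z3 + 3931200 * z1 * z2 + 22604400 * z1 * z3
     + 8845200 * z2 * z3"

lemma gram_lo_11_sos:
  "gram_lo_11 z0 z1 z2 z3 =
   (867206280 * (100 * z0 + 45 * z1 + 23 * z2 + 198 * z3)^2
    + 506010007 * (100 * z1 + 21 * z2 + 69 * z3)^2 + 168034974 * (100 * z2 - 13 * z3)^2
    + 9521005420000 * z3^2 + 1982475360000 * z0^2 + 28771740000 * (z0 + z1)^2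
    + 28974444000 * (z0 - z2)^2 + 28315656000 * (z0 + z3)^2 + 1976411990600 * z1^2
    + 5420485500 * (z1 + z2)^2 + 83922996900 * (z1 + z3)^2 + 1984532362230 * z2^2
    + 41420433063 * (z2 - z3)^2 + 2047068938984 * z3^2) / 1000000"
  unfolding gram_lo_11_def by algebra

definition gram_lo_12 ::
  "real \<Rightarrow> real \<Rightarrow> real \<Rightarrow> real \<Rightarrow> real \<Rightarrow>
   real \<Rightarrow> real \<Rightarrow> real" where
  "gram_lo_12 z0 z1 z2 z3 z4 z5 z6 =
     14054040 * z0^2 + 14054040 * z1^2 + 3767400 * z2^2 + 6458400 * z3^2 + 51400440 * z4^2
     + 6458400 * z5^2 + 51400440 * z6^2 + 17600310 * z0 * z1 + 1474200 * z0 * z2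
     - 6940440 * z0 * z3 + 35431760 * z0 * z4 - 7720440 * z0 * z5 + 40547520 * z0 * z6
     + 1474200 * z1 * z2 - 7720440 * z1 * z3 + 40547520 * z1 * z4 - 6940440 * z1 * z5
     + 35431760 * z1 * z6 - 931840 * z2 * z3 + 7174440 * z2 * z4 - 931840 * z2 * z5
     + 7174440 * z2 * z6 - 12555270 * z3 * z4 + 2827440 * z3 * z5 - 16746912 * z3 * z6
     - 16746912 * z4 * z5 + 74643660 * z4 * z6 - 12555270 * z5 * z6"

lemma gram_lo_12_sos:
  "gram_lo_12 z0 z1 z2 z3 z4 z5 z6 =
   (1226480659 * (100 * z0 + 72 * z1 + 6 * z2 - 28 * z3 + 144 * z4 - 31 * z5 + 165 * z6)^2
    + 595058325 * (100 * z1 + 3 * z2 - 23 * z3 + 127 * z4 - 12 * z5 + 53 * z6)^2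
    + 192658174 * (100 * z2 - 11 * z3 + 117 * z4 - 11 * z5 + 117 * z6)^2
    + 1339594332 * (50 * z3 + 11 * z4 + 2 * z5 - 25 * z6)^2
    + 29022490600 * (20 * z4 - 3 * z5 + 3 * z6)^2 + 1238745636 * (50 * z5 + 17 * z6)^2
    + 10334584620000 * z6^2 + 1571924311800 * z0^2 + 30505744800 * (z0 - z1)^2
    + 1211604600 * (z0 + z2)^2 + 36074154800 * (z0 - z3)^2 + 54558510400 * (z0 + z4)^2
    + 58129957100 * (z0 - z5)^2 + 36829126500 * (z0 + z6)^2 + 1639599236656 * z1^2
    + 28742857812 * (z1 + z2)^2 + 19000843956 * (z1 - z3)^2 + 367799988 * (z1 + z4)^2
    + 18645179112 * (z1 - z5)^2 + 8519351420 * (z1 - z6)^2 + 1679006138036 * z2^2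
    + 6888233463 * (z2 - z3)^2 + 46722852999 * (z2 + z4)^2 + 4448506326 * (z2 - z5)^2
    + 24289238115 * (z2 + z6)^2 + 1577744289556 * z3^2 + 83125428249 * (z3 - z4)^2
    + 27627618034 * (z3 + z5)^2 + 59295272307 * (z3 - z6)^2 + 1580480603068 * z4^2
    + 31748020290 * (z4 - z5)^2 + 165053217999 * (z4 + z6)^2 + 1564197962080 * z5^2
    + 102529923177 * (z5 - z6)^2 + 1513140368692 * z6^2) / 1000000"
  unfolding gram_lo_12_def by algebra

definition gram_lo_13 :: "real \<Rightarrow> real \<Rightarrow> real \<Rightarrow> real \<Rightarrow> real" where
  "gram_lo_13 z0 z1 z2 z3 =
     4520880 * z0^2 + 5405400 * z1^2 + 28009800 * z2^2 + 4914000 * z3^2 - 1965600 * z0 * z1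
     + 10810800 * z0 * z2 - 10810800 * z1 * z2 + 982800 * z1 * z3 - 2948400 * z2 * z3"

lemma gram_lo_13_sos:
  "gram_lo_13 z0 z1 z2 z3 =
   (257222733 * (50 * z0 - 19 * z1 + 105 * z2)^2 + 1232495124 * (25 * z1 - 27 * z2 + 4 * z3)^2
    + 4432511892 * (25 * z2 - 2 * z3)^2 + 701745645000 * z3^2 + 484894112100 * z0^2
    + 1338403650 * (z0 - z1)^2 + 930651750 * (z0 + z2)^2 + 480188785872 * z1^2
    + 6256438965 * (z1 - z2)^2 + 399512400 * (z1 - z3)^2 + 476758468056 * z2^2
    + 13814932008 * (z2 - z3)^2 + 475089941040 * z3^2) / 250000"
  unfolding gram_lo_13_def by algebra

definition gram_lo_14 :: "real \<Rightarrow> real \<Rightarrow> real \<Rightarrow> real \<Rightarrow> real" where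
  "gram_lo_14 z0 z1 z2 z3 =
     5405400 * z0^2 + 4520880 * z1^2 + 4914000 * z2^2 + 28009800 * z3^2 - 1965600 * z0 * z1
     + 982800 * z0 * z2 - 10810800 * z0 * z3 + 10810800 * z1 * z3 - 2948400 * z2 * z3"

lemma gram_lo_14_sos:
  "gram_lo_14 z0 z1 z2 z3 =
   (1382698932 * (50 * z0 - 14 * z1 + 7 * z2 - 78 * z3)^2
    + 229280400 * (100 * z1 + 6 * z2 + 169 * z3)^2 + 288697819 * (100 * z2 - 33 * z3)^2
    + 10774227300000 * z3^2 + 1913412383400 * z0^2 + 14910747600 * (z0 - z1)^2
    + 7455373800 * (z0 + z2)^2 + 12874165200 * (z0 - z3)^2 + 1919438510808 * z1^2
    + 2063744664 * (z1 - z2)^2 + 20654006256 * (z1 + z3)^2 + 1940530255496 * z2^2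
    + 966093972 * (z2 + z3)^2 + 1925868702993 * z3^2) / 1000000"
  unfolding gram_lo_14_def by algebra

definition gram_lo_15 :: "real \<Rightarrow> real \<Rightarrow> real \<Rightarrow> real \<Rightarrow> real" where
  "gram_lo_15 z0 z1 z2 z3 =
     3046680 * z0^2 + 3046680 * z1^2 + 7567560 * z2^2 + 7567560 * z3^2 + 131040 * z0 * z2
     + 982800 * z0 * z3 + 982800 * z1 * z2 + 131040 * z1 * z3 - 1965600 * z2 * z3"

lemma gram_lo_15_sos:
  "gram_lo_15 z0 z1 z2 z3 =
   (127002761 * (100 * z0 + 5 * z2 + 39 * z3)^2 + 127002761 * (100 * z1 + 39 * z2 + 5 * z3)^2
    + 2238957852 * (50 * z2 - 9 * z3)^2 + 5406568960000 * z3^2 + 1770723002600 * z0^2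
    + 2018619500 * (z0 + z2)^2 + 3910767900 * (z0 - z3)^2 + 1770723002600 * z1^2
    + 3910767900 * (z1 - z2)^2 + 2018619500 * (z1 + z3)^2 + 1743089670704 * z2^2
    + 24800043390 * (z2 - z3)^2 + 1752559754692 * z3^2) / 1000000"
  unfolding gram_lo_15_def by algebra

lemma gram_lo_nonneg:
  "0 \<le> gram_lo_0 z0 z1 z2 z3 z4 z5 z6 z7 z8 z9 z10 z11 z12 z13 z14 z15"
  "0 \<le> gram_lo_1 z0 z1 z2 z3 z4 z5 z6 z7 z8 z9"
  "0 \<le> gram_lo_2 z0 z1 z2 z3 z4 z5 z6 z7 z8 z9"
  "0 \<le> gram_lo_3 z0 z1 z2 z3 z4 z5 z6 z7"
  "0 \<le> gram_lo_4 z0 z1 z2 z3 z4 z5 z6 z7 z8 z9"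
  "0 \<le> gram_lo_5 z0 z1 z2 z3 z4 z5 z6"
  "0 \<le> gram_lo_6 z0 z1 z2 z3 z4 z5"
  "0 \<le> gram_lo_7 z0 z1 z2 z3"
  "0 \<le> gram_lo_8 z0 z1 z2 z3 z4 z5 z6 z7 z8 z9"
  "0 \<le> gram_lo_9 z0 z1 z2 z3 z4 z5"
  "0 \<le> gram_lo_10 z0 z1 z2 z3 z4 z5 z6"
  "0 \<le> gram_lo_11 z0 z1 z2 z3"
  "0 \<le> gram_lo_12 z0 z1 z2 z3 z4 z5 z6"
  "0 \<le> gram_lo_13 z0 z1 z2 z3"
  "0 \<le> gram_lo_14 z0 z1 z2 z3"
  "0 \<le> gram_lo_15 z0 z1 z2 z3"
  unfolding gram_lo_0_sos gram_lo_1_sos gram_lo_2_sos gram_lo_3_sos gram_lo_4_sos gram_lo_5_sos gram_lo_6_sos gram_lo_7_sos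
    gram_lo_8_sos gram_lo_9_sos gram_lo_10_sos gram_lo_11_sos gram_lo_12_sos gram_lo_13_sos gram_lo_14_sos gram_lo_15_sos
  by (intro divide_nonneg_pos add_nonneg_nonneg mult_nonneg_nonneg; simp)+

lemma certificate_lo:
  fixes a b u v :: real
  shows "4914000 * f4_rat_part (1 + a) (1 + b) (1 + u) (1 + v)
         + 10958220 * f4_sqrt5_part (1 + a) (1 + b) (1 + u) (1 + v)
         - 2457000 * (a^2 + b^2 + u^2 + v^2) =
    gram_lo_0 v u (u*v) b (b*v) (b*u) (b*u*v) (b^2) (b^2*u) a (a*v) (a*u) (a*u*v) (a*b) (a^2) (a^2*v) +
    (1 + v) * gram_lo_1 v u (u*v) b (b*u) a (a*v) (a*u) (a*b) (a^2) +
    (1 + u) * gram_lo_2 v u (u*v) b (b*v) (b*u) (b^2) a (a*v) (a*b) +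
    (1 + u) * (1 + v) * gram_lo_3 v u (u*v) b (b*u) a (a*v) (a*b) +
    b * gram_lo_4 v u (u*v) b (b*u) a (a*v) (a*u) (a*b) (a^2) +
    b * (1 + v) * gram_lo_5 v u (u*v) b (b*u) a (a*u) +
    b * (1 + u) * gram_lo_6 v u (u*v) b a (a*v) +
    b * (1 + u) * (1 + v) * gram_lo_7 v u b a +
    a * gram_lo_8 v u (u*v) b (b*v) (b*u) (b^2) a (a*v) (a*b) +
    a * (1 + v) * gram_lo_9 v u (u*v) b (b*u) a +
    a * (1 + u) * gram_lo_10 v u (u*v) b (b*v) a (a*v) +
    a * (1 + u) * (1 + v) * gram_lo_11 v u b a +
    a * b * gram_lo_12 v u (u*v) b (b*u) a (a*v) +
    a * b * (1 + v) * gram_lo_13 v u b a +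
    a * b * (1 + u) * gram_lo_14 v u b a +
    a * b * (1 + u) * (1 + v) * gram_lo_15 v u b a"
  unfolding f4_rat_part_def f4_sqrt5_part_def
    gram_lo_0_def gram_lo_1_def gram_lo_2_def gram_lo_3_def gram_lo_4_def gram_lo_5_def gram_lo_6_def gram_lo_7_def
    gram_lo_8_def gram_lo_9_def gram_lo_10_def gram_lo_11_def gram_lo_12_def gram_lo_13_def gram_lo_14_def gram_lo_15_def
  by algebra

definition gram_hi_0 ::
  "real \<Rightarrow> real \<Rightarrow> real \<Rightarrow> real \<Rightarrow> real \<Rightarrow>
   real \<Rightarrow> real \<Rightarrow> real \<Rightarrow> real \<Rightarrow> real \<Rightarrow>
   real \<Rightarrow> real \<Rightarrow> real \<Rightarrow> real \<Rightarrow> real \<Rightarrow>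
   real \<Rightarrow> real" where
  "gram_hi_0 z0 z1 z2 z3 z4 z5 z6 z7 z8 z9 z10 z11 z12 z13 z14 z15 =
     80294760 * z0^2 + 80294760 * z1^2 + 17493840 * z2^2 + 162653400 * z3^2 + 11203920 * z4^2
     + 98614152 * z5^2 + 10417680 * z6^2 + 21425040 * z7^2 + 51498720 * z8^2 + 162653400 * z9^2
     + 98614152 * z10^2 + 11203920 * z11^2 + 10417680 * z12^2 + 83696760 * z13^2 + 21425040 * z14^2
     + 51498720 * z15^2 + 94545360 * z0 * z1 + 60147360 * z0 * z2 - 201080880 * z0 * z3
     + 45077760 * z0 * z4 + 19754280 * z0 * z5 + 14054040 * z0 * z6 - 48124440 * z0 * z7
     - 19983600 * z0 * z8 - 89238240 * z0 * z9 + 138181680 * z0 * z10 + 32530680 * z0 * z11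
     + 22768200 * z0 * z12 - 138928608 * z0 * z13 + 4946760 * z0 * z14 + 72412704 * z0 * z15
     + 60147360 * z1 * z2 - 89238240 * z1 * z3 + 32530680 * z1 * z4 + 138181680 * z1 * z5
     + 22768200 * z1 * z6 + 4946760 * z1 * z7 + 72412704 * z1 * z8 - 201080880 * z1 * z9
     + 19754280 * z1 * z10 + 45077760 * z1 * z11 + 14054040 * z1 * z12 - 138928608 * z1 * z13
     - 48124440 * z1 * z14 - 19983600 * z1 * z15 - 68697720 * z2 * z3 + 19950840 * z2 * z4
     + 40458600 * z2 * z5 + 9762480 * z2 * z6 - 9172800 * z2 * z7 + 14185080 * z2 * z8
     - 68697720 * z2 * z9 + 40458600 * z2 * z10 + 19950840 * z2 * z11 + 9762480 * z2 * z12
     - 65176020 * z2 * z13 - 9172800 * z2 * z14 + 14185080 * z2 * z15 - 43210440 * z3 * z4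
     + 46224360 * z3 * z5 - 10155600 * z3 * z6 + 98673120 * z3 * z7 + 84651840 * z3 * z8
     + 50712480 * z3 * z9 - 216569808 * z3 * z10 - 34751808 * z3 * z11 - 23898420 * z3 * z12
     + 172692000 * z3 * z13 - 28782000 * z3 * z14 - 127829520 * z3 * z15 + 22276800 * z4 * z5
     + 7076160 * z4 * z6 - 4226040 * z4 * z7 + 8894340 * z4 * z8 - 34751808 * z4 * z9
     + 38273040 * z4 * z10 + 12465180 * z4 * z11 + 8157240 * z4 * z12 - 38418120 * z4 * z13
     - 65520 * z4 * z14 + 18869760 * z4 * z15 + 25978680 * z5 * z6 + 55167840 * z5 * z7
     + 131695200 * z5 * z8 - 216569808 * z5 * z9 - 72055620 * z5 * z10 + 38273040 * z5 * z11
     + 5208840 * z5 * z12 - 82620720 * z5 * z13 - 68884920 * z5 * z14 - 79490320 * z5 * z15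
     + 3980340 * z6 * z7 + 13857480 * z6 * z8 - 23898420 * z6 * z9 + 5208840 * z6 * z10
     + 8157240 * z6 * z11 + 1965600 * z6 * z12 - 16591120 * z6 * z13 - 2831920 * z6 * z14
     + 1867320 * z6 * z15 + 53267760 * z7 * z8 - 28782000 * z7 * z9 - 68884920 * z7 * z10
     - 65520 * z7 * z11 - 2831920 * z7 * z12 + 31590000 * z7 * z13 - 19338480 * z7 * z14
     - 47194056 * z7 * z15 - 127829520 * z8 * z9 - 79490320 * z8 * z10 + 18869760 * z8 * z11
     + 1867320 * z8 * z12 - 22678110 * z8 * z13 - 47194056 * z8 * z14 - 69926220 * z8 * z15
     + 46224360 * z9 * z10 - 43210440 * z9 * z11 - 10155600 * z9 * z12 + 172692000 * z9 * z13
     + 98673120 * z9 * z14 + 84651840 * z9 * z15 + 22276800 * z10 * z11 + 25978680 * z10 * z12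
     - 82620720 * z10 * z13 + 55167840 * z10 * z14 + 131695200 * z10 * z15 + 7076160 * z11 * z12
     - 38418120 * z11 * z13 - 4226040 * z11 * z14 + 8894340 * z11 * z15 - 16591120 * z12 * z13
     + 3980340 * z12 * z14 + 13857480 * z12 * z15 + 31590000 * z13 * z14 - 22678110 * z13 * z15
     + 53267760 * z14 * z15"

lemma gram_hi_0_sos:
  "gram_hi_0 z0 z1 z2 z3 z4 z5 z6 z7 z8 z9 z10 z11 z12 z13 z14 z15 =
   (7965706773 * (1000 * z0 + 593 * z1 + 378 * z2 - 1262 * z3 + 283 * z4 + 124 * z5 + 88 * z6
    - 302 * z7 - 125 * z8 - 560 * z9 + 867 * z10 + 204 * z11 + 143 * z12 - 872 * z13 + 31 * z14
    + 455 * z15)^2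
    + 5160298116 * (1000 * z1 + 237 * z2 + 292 * z3 + 56 * z4 + 1225 * z5 + 140 * z6 + 325 * z7
    + 817 * z8 - 1435 * z9 - 603 * z10 + 250 * z11 + 5 * z12 - 547 * z13 - 495 * z14 - 610 * z15)^2
    + 260533191 * (1000 * z2 + 17 * z3 + 300 * z4 + 583 * z5 + 199 * z6 + 203 * z7 + 338 * z8
    + 17 * z9 + 583 * z10 + 300 * z11 + 199 * z12 + 126 * z13 + 203 * z14 + 338 * z15)^2
    + 3072875020 * (1000 * z3 + 195 * z4 + 557 * z5 + 55 * z6 + 458 * z7 + 567 * z8 - 305 * z9
    - 392 * z10 - 20 * z11 + 76 * z12 + 225 * z13 - 125 * z14 - 295 * z15)^2
    + 262627246 * (1000 * z4 + 386 * z5 + 252 * z6 + 326 * z7 + 479 * z8 + 460 * z9 + 1225 * z10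
    + 303 * z11 + 88 * z12 + 223 * z13 + 489 * z14 + 934 * z15)^2
    + 846659024 * (1000 * z5 + 211 * z6 + 185 * z7 + 562 * z8 - 860 * z9 - 222 * z10 + 108 * z11
    - 98 * z12 - 278 * z13 - 252 * z14 - 246 * z15)^2
    + 741267603 * (1000 * z6 + 47 * z7 - 71 * z8 + 550 * z9 + 108 * z10 + 44 * z11 - 23 * z12
    + 228 * z13 + 292 * z14 + 307 * z15)^2
    + 94355151 * (1000 * z7 + 550 * z8 + 1285 * z9 + 1053 * z10 + 400 * z11 + 898 * z12 + 973 * z13
    + 940 * z14 + 1062 * z15)^2
    + 143567468 * (1000 * z8 - 423 * z9 - 232 * z10 - 27 * z11 + 362 * z12 - 247 * z13 - 136 * z14
    - 195 * z15)^2
    + 1700663232 * (1000 * z9 + 499 * z10 + 325 * z11 + 47 * z12 + 262 * z13 + 474 * z14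
    + 534 * z15)^2
    + 386640291 * (1000 * z10 + 33 * z11 + 587 * z12 - 72 * z13 + 243 * z14 + 525 * z15)^2
    + 146892578 * (1000 * z11 + 275 * z12 + 171 * z13 + 171 * z14 + 285 * z15)^2
    + 2134157996 * (500 * z12 + 13 * z13 - 4 * z14 - 44 * z15)^2
    + 205553322 * (1000 * z13 + 197 * z14 - 24 * z15)^2 + 1053353424 * (250 * z14 + 149 * z15)^2
    + 130678995000000 * z15^2 + 38323574733000 * z0^2 + 3603883611000 * (z0 + z1)^2
    + 3669160194000 * (z0 - z2)^2 + 1322052474000 * (z0 - z3)^2 + 407016759000 * (z0 - z4)^2
    + 33639852000 * (z0 - z5)^2 + 1719803976000 * (z0 + z6)^2 + 578554554000 * (z0 - z7)^2
    + 3466653375000 * (z0 - z8)^2 + 1116207120000 * (z0 - z9)^2 + 2816227809000 * (z0 + z10)^2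
    + 1529818308000 * (z0 + z11)^2 + 686068539000 * (z0 - z12)^2 + 334093944000 * (z0 - z13)^2
    + 401090037000 * (z0 + z14)^2 + 3761381715000 * (z0 - z15)^2 + 28311916069215 * z1^2
    + 1167689487042 * (z1 - z2)^2 + 7454934989082 * (z1 - z3)^2 + 760360565913 * (z1 + z4)^2
    + 1984457467764 * (z1 + z5)^2 + 285821517768 * (z1 + z6)^2 + 3212324550522 * (z1 - z7)^2
    + 4870346223375 * (z1 - z8)^2 + 3764298362160 * (z1 - z9)^2 + 3956975038737 * (z1 + z10)^2
    + 185991256644 * (z1 + z11)^2 + 1416540776373 * (z1 + z12)^2 + 4712221056792 * (z1 - z13)^2
    + 1691979811941 * (z1 + z14)^2 + 665322196995 * (z1 - z15)^2 + 37497183168270 * z2^2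
    + 3500561098164 * (z2 + z3)^2 + 1228950230454 * (z2 - z4)^2 + 493008744756 * (z2 - z5)^2
    + 87933405048 * (z2 + z6)^2 + 333022220688 * (z2 + z7)^2 + 1609937436714 * (z2 - z8)^2
    + 1857333222660 * (z2 + z9)^2 + 2066704185522 * (z2 - z10)^2 + 617201352576 * (z2 - z11)^2
    + 415372184202 * (z2 - z12)^2 + 2972109083292 * (z2 + z13)^2 + 509983739526 * (z2 + z14)^2
    + 2803827816150 * (z2 - z15)^2 + 24492313509426 * z3^2 + 522231817074 * (z3 - z4)^2
    + 2256645195977 * (z3 - z5)^2 + 3982965484945 * (z3 - z6)^2 + 254178563393 * (z3 - z7)^2
    + 1123236758340 * (z3 + z8)^2 + 5519412959561 * (z3 + z9)^2 + 2190957038143 * (z3 - z10)^2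
    + 3408104046796 * (z3 - z11)^2 + 664317941705 * (z3 + z12)^2 + 894976442190 * (z3 + z13)^2
    + 1614147517805 * (z3 + z14)^2 + 6665893730764 * (z3 + z15)^2 + 54717655428031 * z4^2
    + 390725194916 * (z4 - z5)^2 + 280819211568 * (z4 + z6)^2 + 343752214082 * (z4 - z7)^2
    + 1559025296057 * (z4 - z8)^2 + 118355367200 * (z4 + z9)^2 + 1036102323935 * (z4 + z10)^2
    + 98812807164 * (z4 + z11)^2 + 152107816117 * (z4 - z12)^2 + 326915477140 * (z4 - z13)^2
    + 494452242591 * (z4 + z14)^2 + 885226788685 * (z4 - z15)^2 + 43453245564746 * z5^2
    + 1534056195835 * (z5 - z6)^2 + 2174479238631 * (z5 - z7)^2 + 2518903834818 * (z5 - z8)^2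
    + 3244775862441 * (z5 - z9)^2 + 1208525247403 * (z5 - z10)^2 + 1680775967576 * (z5 - z11)^2
    + 1331699033649 * (z5 + z12)^2 + 3414826405522 * (z5 - z13)^2 + 1110804756445 * (z5 + z14)^2
    + 733362792578 * (z5 - z15)^2 + 43392813336260 * z6^2 + 1474688005611 * (z6 - z7)^2
    + 2559445177958 * (z6 - z8)^2 + 492830441907 * (z6 + z9)^2 + 2876979248873 * (z6 + z10)^2
    + 114922603916 * (z6 + z11)^2 + 2306833047 * (z6 - z12)^2 + 1787622117850 * (z6 - z13)^2
    + 1088851085769 * (z6 + z14)^2 + 2005453164154 * (z6 + z15)^2 + 41348636880774 * z7^2
    + 1823591498597 * (z7 - z8)^2 + 3636248237089 * (z7 + z9)^2 + 367584523595 * (z7 + z10)^2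
    + 1650938410628 * (z7 - z11)^2 + 426197600006 * (z7 + z12)^2 + 527436890454 * (z7 + z13)^2
    + 1737474228871 * (z7 + z14)^2 + 2858725965345 * (z7 + z15)^2 + 24358880225233 * z8^2
    + 5072841453974 * (z8 + z9)^2 + 1480744251803 * (z8 - z10)^2 + 3020868637734 * (z8 - z11)^2
    + 509283150466 * (z8 + z12)^2 + 2039121503872 * (z8 + z13)^2 + 2483386686287 * (z8 + z14)^2
    + 1293203943574 * (z8 + z15)^2 + 31208103759547 * z9^2 + 537296688404 * (z9 - z10)^2
    + 1904280509432 * (z9 + z11)^2 + 1950240932725 * (z9 - z12)^2 + 3692793849435 * (z9 + z13)^2
    + 1556551446385 * (z9 - z14)^2 + 1330816023234 * (z9 + z15)^2 + 44248211050106 * z10^2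
    + 3308159799902 * (z10 + z11)^2 + 680801366350 * (z10 - z12)^2 + 611205181395 * (z10 - z13)^2
    + 429885065958 * (z10 + z14)^2 + 1856960058573 * (z10 - z15)^2 + 42344837331024 * z11^2
    + 455636234923 * (z11 + z12)^2 + 705493597746 * (z11 - z13)^2 + 1756291276781 * (z11 + z14)^2
    + 1343507581561 * (z11 + z15)^2 + 52693085622279 * z12^2 + 549454432670 * (z12 - z13)^2
    + 344197796285 * (z12 - z14)^2 + 1316114068495 * (z12 - z15)^2 + 37785964160525 * z13^2
    + 178779338598 * (z13 - z14)^2 + 4369788271260 * (z13 + z15)^2 + 46647043391519 * z14^2
    + 784731345462 * (z14 - z15)^2 + 26919335488821 * z15^2) / 100000000"
  unfolding gram_hi_0_def by algebra

definition gram_hi_1 ::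
  "real \<Rightarrow> real \<Rightarrow> real \<Rightarrow> real \<Rightarrow> real \<Rightarrow>
   real \<Rightarrow> real \<Rightarrow> real \<Rightarrow> real \<Rightarrow> real \<Rightarrow>
   real" where
  "gram_hi_1 z0 z1 z2 z3 z4 z5 z6 z7 z8 z9 =
     19939920 * z0^2 + 52088400 * z1^2 + 9369360 * z2^2 + 51597000 * z3^2 + 9336600 * z4^2
     + 168550200 * z5^2 + 4717440 * z6^2 + 34398000 * z7^2 + 13759200 * z8^2 + 61916400 * z9^2
     + 14742000 * z0 * z1 + 19874400 * z0 * z2 - 28501200 * z0 * z3 - 9828000 * z0 * z4
     + 97297200 * z0 * z5 + 15331680 * z0 * z6 + 35380800 * z0 * z7 + 24570000 * z0 * z8
     + 59950800 * z0 * z9 + 16707600 * z1 * z2 - 83538000 * z1 * z3 + 25552800 * z1 * z4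
     + 48157200 * z1 * z5 + 6879600 * z1 * z6 + 57985200 * z1 * z7 - 9828000 * z1 * z8
     + 42260400 * z1 * z9 - 24570000 * z2 * z3 - 2948400 * z2 * z4 + 56019600 * z2 * z5
     + 8845200 * z2 * z6 + 24570000 * z2 * z7 + 11793600 * z2 * z8 + 35380800 * z2 * z9
     - 11793600 * z3 * z4 - 114004800 * z3 * z5 - 14742000 * z3 * z6 - 72727200 * z3 * z7
     - 6879600 * z3 * z8 - 75675600 * z3 * z9 - 28501200 * z4 * z5 - 3931200 * z4 * z6
     + 3931200 * z4 * z7 - 13759200 * z4 * z8 - 12776400 * z4 * z9 + 48157200 * z5 * z6
     + 124815600 * z5 * z7 + 73710000 * z5 * z8 + 197542800 * z5 * z9 + 17690400 * z6 * z7
     + 11793600 * z6 * z8 + 29484000 * z6 * z9 + 18673200 * z7 * z8 + 79606800 * z7 * z9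
     + 42260400 * z8 * z9"

lemma gram_hi_1_sos:
  "gram_hi_1 z0 z1 z2 z3 z4 z5 z6 z7 z8 z9 =
   (1936429847 * (1000 * z0 + 381 * z1 + 513 * z2 - 736 * z3 - 254 * z4 + 2512 * z5 + 396 * z6
    + 914 * z7 + 634 * z8 + 1548 * z9)^2
    + 4870701502 * (1000 * z1 + 94 * z2 - 746 * z3 + 301 * z4 + 114 * z5 + 11 * z6 + 457 * z7
    - 197 * z8 + 200 * z9)^2
    + 326523942 * (1000 * z2 - 478 * z3 - 100 * z4 + 773 * z5 + 135 * z6 + 342 * z7 + 151 * z8
    + 427 * z9)^2
    + 1266797684 * (1000 * z3 + 99 * z4 - 1251 * z5 - 89 * z6 - 490 * z7 - 104 * z8 - 620 * z9)^2
    + 295137445 * (1000 * z4 - 593 * z5 - 7 * z6 + 166 * z7 - 236 * z8 - 265 * z9)^2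
    + 8926030920 * (500 * z5 + 67 * z6 + 159 * z7 + 104 * z8 + 246 * z9)^2
    + 53943452 * (1000 * z6 - 90 * z7 + 601 * z8 + 747 * z9)^2
    + 173028269 * (1000 * z7 + 203 * z8 + 189 * z9)^2 + 3028863664 * (250 * z8 + 29 * z9)^2
    + 152658724000000 * z9^2 + 53441140210000 * z0^2 + 679771707000 * (z0 - z1)^2
    + 331488489000 * (z0 + z2)^2 + 152367392000 * (z0 + z3)^2 + 453181138000 * (z0 + z4)^2
    + 548224336000 * (z0 + z5)^2 + 242219412000 * (z0 - z6)^2 + 856880158000 * (z0 - z7)^2
    + 803477002000 * (z0 + z8)^2 + 53403156000 * (z0 - z9)^2 + 47000042316520 * z1^2
    + 946964073691 * (z1 - z2)^2 + 350767531648 * (z1 - z3)^2 + 1045090088422 * (z1 - z4)^2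
    + 702757755984 * (z1 - z5)^2 + 1758506117972 * (z1 - z6)^2 + 981297754198 * (z1 - z7)^2
    + 375820631762 * (z1 + z8)^2 + 3203387002436 * (z1 - z9)^2 + 53328490416592 * z2^2
    + 265460874344 * (z2 + z3)^2 + 258552173794 * (z2 - z4)^2 + 990614622936 * (z2 + z5)^2
    + 238888081424 * (z2 - z6)^2 + 363882807970 * (z2 - z7)^2 + 762218874062 * (z2 + z8)^2
    + 279672709372 * (z2 + z9)^2 + 52388957052536 * z3^2 + 991783006924 * (z3 + z4)^2
    + 470054465860 * (z3 - z5)^2 + 1068657865904 * (z3 + z6)^2 + 923094363524 * (z3 + z7)^2
    + 888588988720 * (z3 - z8)^2 + 1217468607068 * (z3 + z9)^2 + 51789184833180 * z4^2
    + 490371646344 * (z4 + z5)^2 + 277243216750 * (z4 - z6)^2 + 258620353242 * (z4 - z7)^2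
    + 318801304250 * (z4 + z8)^2 + 737468926456 * (z4 - z9)^2 + 49881472440009 * z5^2
    + 119132493067 * (z5 + z6)^2 + 2377628903114 * (z5 - z7)^2 + 2526745606878 * (z5 + z8)^2
    + 1522496348041 * (z5 + z9)^2 + 51888627830265 * z6^2 + 1055985394172 * (z6 - z7)^2
    + 581151965152 * (z6 + z8)^2 + 248980021801 * (z6 - z9)^2 + 45658500092698 * z7^2
    + 385924077862 * (z7 + z8)^2 + 2404623274982 * (z7 - z9)^2 + 49765246183370 * z8^2
    + 2077963731895 * (z8 + z9)^2 + 45918687430657 * z9^2) / 100000000"
  unfolding gram_hi_1_def by algebra

definition gram_hi_2 ::
  "real \<Rightarrow> real \<Rightarrow> real \<Rightarrow> real \<Rightarrow> real \<Rightarrow>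
   real \<Rightarrow> real \<Rightarrow> real \<Rightarrow> real \<Rightarrow> real \<Rightarrow>
   real" where
  "gram_hi_2 z0 z1 z2 z3 z4 z5 z6 z7 z8 z9 =
     52088400 * z0^2 + 19939920 * z1^2 + 9369360 * z2^2 + 168550200 * z3^2 + 34398000 * z4^2
     + 4717440 * z5^2 + 61916400 * z6^2 + 51597000 * z7^2 + 9336600 * z8^2 + 13759200 * z9^2
     + 14742000 * z0 * z1 + 16707600 * z0 * z2 + 48157200 * z0 * z3 + 57985200 * z0 * z4
     + 6879600 * z0 * z5 + 42260400 * z0 * z6 - 83538000 * z0 * z7 + 25552800 * z0 * z8
     - 9828000 * z0 * z9 + 19874400 * z1 * z2 + 97297200 * z1 * z3 + 35380800 * z1 * z4
     + 15331680 * z1 * z5 + 59950800 * z1 * z6 - 28501200 * z1 * z7 - 9828000 * z1 * z8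
     + 24570000 * z1 * z9 + 56019600 * z2 * z3 + 24570000 * z2 * z4 + 8845200 * z2 * z5
     + 35380800 * z2 * z6 - 24570000 * z2 * z7 - 2948400 * z2 * z8 + 11793600 * z2 * z9
     + 124815600 * z3 * z4 + 48157200 * z3 * z5 + 197542800 * z3 * z6 - 114004800 * z3 * z7
     - 28501200 * z3 * z8 + 73710000 * z3 * z9 + 17690400 * z4 * z5 + 79606800 * z4 * z6
     - 72727200 * z4 * z7 + 3931200 * z4 * z8 + 18673200 * z4 * z9 + 29484000 * z5 * z6
     - 14742000 * z5 * z7 - 3931200 * z5 * z8 + 11793600 * z5 * z9 - 75675600 * z6 * z7
     - 12776400 * z6 * z8 + 42260400 * z6 * z9 - 11793600 * z7 * z8 - 6879600 * z7 * z9
     - 13759200 * z8 * z9"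

lemma gram_hi_2_sos:
  "gram_hi_2 z0 z1 z2 z3 z4 z5 z6 z7 z8 z9 =
   (5151277847 * (1000 * z0 + 143 * z1 + 162 * z2 + 467 * z3 + 563 * z4 + 67 * z5 + 410 * z6
    - 811 * z7 + 248 * z8 - 95 * z9)^2
    + 1830957686 * (1000 * z1 + 477 * z2 + 2469 * z3 + 740 * z4 + 392 * z5 + 1472 * z6 - 452 * z7
    - 368 * z8 + 709 * z9)^2
    + 326523942 * (1000 * z2 + 773 * z3 + 342 * z4 + 135 * z5 + 427 * z6 - 478 * z7 - 100 * z8
    + 151 * z9)^2
    + 4317142028 * (1000 * z3 + 337 * z4 + 102 * z5 + 493 * z6 - 367 * z7 - 77 * z8 + 155 * z9)^2
    + 219611234 * (1000 * z4 - 17 * z5 + 147 * z6 - 390 * z7 + 453 * z8 + 30 * z9)^2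
    + 58900802 * (1000 * z5 + 697 * z6 + 811 * z7 + 381 * z8 + 653 * z9)^2
    + 158371535 * (1000 * z6 - 161 * z7 - 145 * z8 + 148 * z9)^2
    + 608872592 * (1000 * z7 + 34 * z8 + 147 * z9)^2 + 14364616192 * (125 * z8 - 27 * z9)^2
    + 186199041000000 * z9^2 + 48009492148000 * z0^2 + 467267879000 * (z0 + z1)^2
    + 872988786000 * (z0 + z2)^2 + 2213245451000 * (z0 + z3)^2 + 909427861000 * (z0 - z4)^2
    + 1155615749000 * (z0 - z5)^2 + 996082730000 * (z0 + z6)^2 + 786333917000 * (z0 + z7)^2
    + 123093944000 * (z0 + z8)^2 + 2028604535000 * (z0 - z9)^2 + 53860729587814 * z1^2
    + 1018681174398 * (z1 + z2)^2 + 217987365493 * (z1 + z3)^2 + 592915824123 * (z1 - z4)^2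
    + 505805964107 * (z1 - z5)^2 + 350866038390 * (z1 + z6)^2 + 57980177869 * (z1 - z7)^2
    + 292489118008 * (z1 - z8)^2 + 331110177495 * (z1 + z9)^2 + 49904965421610 * z2^2
    + 2519549344944 * (z2 + z3)^2 + 709920518238 * (z2 + z4)^2 + 92493880362 * (z2 - z5)^2
    + 1870448689476 * (z2 + z6)^2 + 874568697102 * (z2 - z7)^2 + 326356211376 * (z2 - z8)^2
    + 435978121932 * (z2 + z9)^2 + 49437615878170 * z3^2 + 67364481019 * (z3 - z4)^2
    + 170040142079 * (z3 + z5)^2 + 323703418580 * (z3 + z6)^2 + 893914275645 * (z3 - z7)^2
    + 406652417440 * (z3 - z8)^2 + 1636693805683 * (z3 + z9)^2 + 51124470676712 * z4^2
    + 655216716179 * (z4 - z5)^2 + 375796047066 * (z4 - z6)^2 + 1063150891955 * (z4 + z7)^2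
    + 366872759036 * (z4 - z8)^2 + 410764155309 * (z4 - z9)^2 + 53155863840930 * z5^2
    + 231457440386 * (z5 - z6)^2 + 675302758655 * (z5 + z7)^2 + 462073498190 * (z5 - z8)^2
    + 333047744537 * (z5 + z9)^2 + 52681141961574 * z6^2 + 168122950040 * (z6 - z7)^2
    + 255655344204 * (z6 - z8)^2 + 623610139146 * (z6 + z9)^2 + 50683359017812 * z7^2
    + 426119543491 * (z7 + z8)^2 + 697609267603 * (z7 + z9)^2 + 54038262158306 * z8^2
    + 1223996854430 * (z8 - z9)^2 + 51545826111528 * z9^2) / 100000000"
  unfolding gram_hi_2_def by algebra

definition gram_hi_3 ::
  "real \<Rightarrow> real \<Rightarrow> real \<Rightarrow> real \<Rightarrow> real \<Rightarrow>
   real \<Rightarrow> real \<Rightarrow> real \<Rightarrow> real" where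
  "gram_hi_3 z0 z1 z2 z3 z4 z5 z6 z7 =
     11902800 * z0^2 + 11902800 * z1^2 + 786240 * z2^2 + 51105600 * z3^2 + 2751840 * z4^2
     + 51105600 * z5^2 + 2751840 * z6^2 + 3439800 * z7^2 + 10810800 * z0 * z1 + 65520 * z0 * z2
     + 14742000 * z0 * z3 + 1965600 * z0 * z4 - 7862400 * z0 * z5 + 3931200 * z0 * z6
     + 5896800 * z0 * z7 + 65520 * z1 * z2 - 7862400 * z1 * z3 + 3931200 * z1 * z4
     + 14742000 * z1 * z5 + 1965600 * z1 * z6 + 5896800 * z1 * z7 + 5896800 * z3 * z4
     - 92383200 * z3 * z5 - 1965600 * z3 * z6 + 1965600 * z3 * z7 - 1965600 * z4 * z5
     + 982800 * z4 * z7 + 5896800 * z5 * z6 + 1965600 * z5 * z7 + 982800 * z6 * z7"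

lemma gram_hi_3_sos:
  "gram_hi_3 z0 z1 z2 z3 z4 z5 z6 z7 =
   (1143121793 * (1000 * z0 + 473 * z1 + 3 * z2 + 645 * z3 + 86 * z4 - 344 * z5 + 172 * z6
    + 258 * z7)^2
    + 887520428 * (1000 * z1 + 2 * z2 - 836 * z3 + 169 * z4 + 1040 * z5 + 6 * z6 + 175 * z7)^2
    + 31453045 * (1000 * z2 - 21 * z3 - 18 * z4 - 21 * z5 - 18 * z6 - 36 * z7)^2
    + 15873249512 * (500 * z3 + 45 * z4 - 453 * z5 - 28 * z6 + 5 * z7)^2
    + 162090085 * (1000 * z4 + 633 * z5 + 12 * z6 - 37 * z7)^2
    + 647604873 * (1000 * z5 + 241 * z6 + 118 * z7)^2 + 144415928 * (1000 * z6 - 129 * z7)^2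
    + 181554936000000 * z7^2 + 46349935067000 * z0^2 + 156608089000 * (z0 - z1)^2
    + 153365379000 * (z0 - z2)^2 + 213556485000 * (z0 - z3)^2 + 28474198000 * (z0 - z4)^2
    + 113896792000 * (z0 + z5)^2 + 56948396000 * (z0 - z6)^2 + 85422594000 * (z0 - z7)^2
    + 46417905206733 * z1^2 + 121130680267 * (z1 - z2)^2 + 97765590595 * (z1 + z3)^2
    + 69139372346 * (z1 + z4)^2 + 78388062616 * (z1 + z5)^2 + 44939159308 * (z1 - z6)^2
    + 24200213038 * (z1 + z7)^2 + 46683103744017 * z2^2 + 67492568839 * (z2 - z3)^2
    + 28752517258 * (z2 - z4)^2 + 5826854864 * (z2 - z5)^2 + 34346280324 * (z2 - z6)^2
    + 63098797582 * (z2 - z7)^2 + 40890878669757 * z3^2 + 336532979168 * (z3 - z4)^2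
    + 1398768026315 * (z3 + z5)^2 + 1567474668418 * (z3 + z6)^2 + 1809561238750 * (z3 - z7)^2
    + 45863140342734 * z4^2 + 508802944942 * (z4 + z5)^2 + 236019302492 * (z4 + z6)^2
    + 66532569544 * (z4 - z7)^2 + 40111854980442 * z5^2 + 1714093962374 * (z5 - z6)^2
    + 1513695985781 * (z5 + z7)^2 + 43140325920941 * z6^2 + 32160445682 * (z6 - z7)^2
    + 43479348598886 * z7^2) / 100000000"
  unfolding gram_hi_3_def by algebra

definition gram_hi_4 ::
  "real \<Rightarrow> real \<Rightarrow> real \<Rightarrow> real \<Rightarrow> real \<Rightarrow>
   real \<Rightarrow> real \<Rightarrow> real \<Rightarrow> real \<Rightarrow> real \<Rightarrow>
   real" where
  "gram_hi_4 z0 z1 z2 z3 z4 z5 z6 z7 z8 z9 =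
     9271080 * z0^2 + 6191640 * z1^2 + 3407040 * z2^2 + 22800960 * z3^2 + 22113000 * z4^2
     + 19024200 * z5^2 + 8452080 * z6^2 + 8648640 * z7^2 + 24570000 * z8^2 + 19656000 * z9^2
     + 4029480 * z0 * z1 - 687960 * z0 * z2 - 1932840 * z0 * z3 + 5569200 * z0 * z4
     - 16078608 * z0 * z5 + 11737440 * z0 * z6 - 2276820 * z0 * z7 - 9916920 * z0 * z8
     - 13824720 * z0 * z9 + 163800 * z1 * z2 - 9795240 * z1 * z3 + 7547904 * z1 * z4
     - 11164608 * z1 * z5 + 5585580 * z1 * z6 + 6823440 * z1 * z7 - 11859120 * z1 * z8
     - 5985720 * z1 * z9 + 1638000 * z2 * z3 + 6322680 * z2 * z4 + 671580 * z2 * z5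
     - 1670760 * z2 * z6 + 294840 * z2 * z7 + 3064880 * z2 * z8 + 2082080 * z2 * z9
     + 1113840 * z3 * z4 + 24289200 * z3 * z5 - 8934120 * z3 * z6 - 3013920 * z3 * z7
     + 39452400 * z3 * z8 + 24887520 * z3 * z9 - 13824720 * z4 * z5 + 7978880 * z4 * z6
     + 11007360 * z4 * z7 - 1056510 * z4 * z8 - 3950856 * z4 * z9 - 17755920 * z5 * z6
     - 88920 * z5 * z7 + 32749920 * z5 * z8 + 30607200 * z5 * z9 + 1099280 * z6 * z7
     - 14761656 * z6 * z8 - 13832910 * z6 * z9 + 963144 * z7 * z8 + 9533160 * z7 * z9
     + 34398000 * z8 * z9"

lemma gram_hi_4_sos:
  "gram_hi_4 z0 z1 z2 z3 z4 z5 z6 z7 z8 z9 =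
   (844213710 * (100 * z0 + 24 * z1 - 4 * z2 - 11 * z3 + 33 * z4 - 95 * z5 + 70 * z6 - 13 * z7
    - 59 * z8 - 82 * z9)^2
    + 488187368 * (100 * z1 + 3 * z2 - 96 * z3 + 64 * z4 - 75 * z5 + 29 * z6 + 75 * z7 - 97 * z8
    - 28 * z9)^2
    + 255857262 * (100 * z2 + 37 * z3 + 124 * z4 + 5 * z5 - 25 * z6 - z7 + 58 * z8 + 31 * z9)^2
    + 1705713210 * (100 * z3 + 16 * z4 + 45 * z5 - 13 * z6 + 11 * z7 + 83 * z8 + 59 * z9)^2
    + 1403312888 * (100 * z4 - 24 * z5 + 16 * z6 + 23 * z7 - 10 * z9)^2
    + 355538012 * (100 * z5 - 19 * z6 + 44 * z7 + 48 * z8 + 79 * z9)^2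
    + 218740958 * (100 * z6 + 13 * z7 - 3 * z8 + 25 * z9)^2
    + 320318185 * (100 * z7 + 34 * z8 + 87 * z9)^2 + 254290928 * (100 * z8 + 31 * z9)^2
    + 1458071010000 * z9^2 + 638610105000 * z0^2 + 11372904000 * (z0 - z1)^2
    + 6294516000 * (z0 - z2)^2 + 37784919000 * (z0 - z3)^2 + 1305243000 * (z0 - z4)^2
    + 19273755000 * (z0 - z5)^2 + 40775970000 * (z0 - z6)^2 + 40932177000 * (z0 - z7)^2
    + 22400889000 * (z0 + z8)^2 + 10192422000 * (z0 + z9)^2 + 669130816560 * z1^2
    + 16488305760 * (z1 + z2)^2 + 11851152240 * (z1 + z3)^2 + 19064413520 * (z1 - z4)^2
    + 3908518800 * (z1 + z5)^2 + 41232400000 * (z1 - z6)^2 + 13709417520 * (z1 + z7)^2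
    + 1264082960 * (z1 + z8)^2 + 35477211680 * (z1 + z9)^2 + 732266349048 * z2^2
    + 24219310656 * (z2 - z3)^2 + 6414186264 * (z2 + z4)^2 + 3097683000 * (z2 - z5)^2
    + 1829307216 * (z2 - z6)^2 + 19264455480 * (z2 + z7)^2 + 8704031072 * (z2 - z8)^2
    + 11988129832 * (z2 + z9)^2 + 542497697772 * z3^2 + 40221488334 * (z3 - z4)^2
    + 24404584980 * (z3 + z5)^2 + 3806670438 * (z3 - z6)^2 + 20448676764 * (z3 + z7)^2
    + 74184795858 * (z3 - z8)^2 + 12855369882 * (z3 + z9)^2 + 554763892610 * z4^2
    + 58755264810 * (z4 + z5)^2 + 35875813972 * (z4 + z6)^2 + 26449448318 * (z4 + z7)^2
    + 40783702730 * (z4 + z8)^2 + 6549634652 * (z4 - z9)^2 + 585302354734 * z5^2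
    + 42087454292 * (z5 + z6)^2 + 26202721886 * (z5 + z7)^2 + 60040849680 * (z5 - z8)^2
    + 11890109780 * (z5 - z9)^2 + 482083605976 * z6^2 + 9965101972 * (z6 - z7)^2
    + 80376226318 * (z6 + z8)^2 + 43651471428 * (z6 + z9)^2 + 691953894948 * z7^2
    + 11699534114 * (z7 + z8)^2 + 21818173450 * (z7 + z9)^2 + 301066130460 * z8^2
    + 91729404598 * (z8 - z9)^2 + 544259622839 * z9^2) / 1000000"
  unfolding gram_hi_4_def by algebra

definition gram_hi_5 ::
  "real \<Rightarrow> real \<Rightarrow> real \<Rightarrow> real \<Rightarrow> real \<Rightarrow>
   real \<Rightarrow> real \<Rightarrow> real" where
  "gram_hi_5 z0 z1 z2 z3 z4 z5 z6 =
     3800160 * z0^2 + 10319400 * z1^2 + 1965600 * z2^2 + 13759200 * z3^2 + 54545400 * z4^2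
     + 3931200 * z5^2 + 8714160 * z6^2 + 1965600 * z0 * z1 + 1048320 * z0 * z2 + 4914000 * z0 * z3
     + 7862400 * z0 * z4 + 982800 * z0 * z5 + 1965600 * z0 * z6 + 4914000 * z1 * z2
     + 9828000 * z1 * z3 + 39312000 * z1 * z4 - 5896800 * z1 * z5 + 14742000 * z1 * z6
     + 3931200 * z2 * z3 + 14742000 * z2 * z4 - 1965600 * z2 * z5 + 4914000 * z2 * z6
     + 28501200 * z3 * z4 - 982800 * z3 * z5 + 5896800 * z3 * z6 - 13759200 * z4 * z5
     + 35380800 * z4 * z6 - 4914000 * z5 * z6"

lemma gram_hi_5_sos:
  "gram_hi_5 z0 z1 z2 z3 z4 z5 z6 =
   (325493669 * (100 * z0 + 30 * z1 + 16 * z2 + 75 * z3 + 121 * z4 + 15 * z5 + 30 * z6)^2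
    + 947742873 * (100 * z1 + 24 * z2 + 44 * z3 + 195 * z4 - 33 * z5 + 75 * z6)^2
    + 77841421 * (100 * z2 + 72 * z3 + 290 * z4 - 40 * z5 + 75 * z6)^2
    + 912266953 * (100 * z3 + 17 * z4 + 8 * z5 - 15 * z6)^2
    + 645133003 * (100 * z4 - 10 * z5 + 19 * z6)^2 + 3281958976 * (25 * z5 + 2 * z6)^2
    + 1706373050000 * z6^2 + 502984820500 * z0^2 + 6318993000 * (z0 + z1)^2
    + 3370129600 * (z0 + z2)^2 + 15797482500 * (z0 + z3)^2 + 7273394900 * (z0 - z4)^2
    + 3159496500 * (z0 + z5)^2 + 6318993000 * (z0 + z6)^2 + 435734006250 * z1^2
    + 26180143680 * (z1 + z2)^2 + 11570603550 * (z1 + z3)^2 + 6528041970 * (z1 - z4)^2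
    + 32679329850 * (z1 + z5)^2 + 30015849600 * (z1 - z6)^2 + 454595179484 * z2^2
    + 13732892112 * (z2 + z3)^2 + 48006402176 * (z2 + z4)^2 + 1059558856 * (z2 + z5)^2
    + 11015209980 * (z2 + z6)^2 + 465639364025 * z3^2 + 11071587095 * (z3 - z4)^2
    + 12912004051 * (z3 + z5)^2 + 36544519950 * (z3 + z6)^2 + 317169699646 * z4^2
    + 52379559512 * (z4 + z5)^2 + 38057075530 * (z4 - z6)^2 + 381347889362 * z5^2
    + 43665078755 * (z5 + z6)^2 + 329033352923 * z6^2) / 1000000"
  unfolding gram_hi_5_def by algebra

definition gram_hi_6 ::
  "real \<Rightarrow> real \<Rightarrow> real \<Rightarrow> real \<Rightarrow> real \<Rightarrow>
   real \<Rightarrow> real" where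
  "gram_hi_6 z0 z1 z2 z3 z4 z5 =
     4422600 * z0^2 + 3734640 * z1^2 + 3931200 * z2^2 + 6388200 * z3^2 + 3439800 * z4^2
     + 3931200 * z5^2 - 982800 * z0 * z1 + 3931200 * z0 * z3 - 1965600 * z0 * z4
     + 3931200 * z0 * z5 + 1965600 * z1 * z4 - 982800 * z1 * z5 + 2948400 * z2 * z3
     - 982800 * z3 * z4 + 1965600 * z3 * z5 - 1965600 * z4 * z5"

lemma gram_hi_6_sos:
  "gram_hi_6 z0 z1 z2 z3 z4 z5 =
   (319943844 * (100 * z0 - 15 * z1 + 61 * z3 - 31 * z4 + 61 * z5)^2
    + 974401832 * (50 * z1 + 6 * z3 + 17 * z4 - 4 * z5)^2 + 1083215376 * (50 * z2 + 27 * z3)^2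
    + 1247007488 * (50 * z3 - 3 * z5)^2 + 163065249 * (100 * z4 - 19 * z5)^2 + 1412369750000 * z5^2
    + 1174766306400 * z0^2 + 11484234000 * (z0 - z1)^2 + 13942551600 * (z0 + z3)^2
    + 9025916400 * (z0 + z4)^2 + 13942551600 * (z0 + z5)^2 + 1205180181760 * z1^2
    + 428067660 * (z1 + z3)^2 + 5784555340 * (z1 + z4)^2 + 3771016340 * (z1 - z5)^2
    + 1211302317600 * z2^2 + 11859242400 * (z2 + z3)^2 + 1212247353976 * z3^2
    + 14224822140 * (z3 + z4)^2 + 2725723644 * (z3 + z5)^2 + 1189341159268 * z4^2
    + 1702893320 * (z4 - z5)^2 + 1220496969979 * z5^2) / 1000000"
  unfolding gram_hi_6_def by algebra

definition gram_hi_7 :: "real \<Rightarrow> real \<Rightarrow> real \<Rightarrow> real \<Rightarrow> real" where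
  "gram_hi_7 z0 z1 z2 z3 =
     8386560 * z0^2 + 8845200 * z1^2 + 45700200 * z2^2 + 2948400 * z3^2 + 5896800 * z0 * z1
     + 20638800 * z0 * z2 + 3931200 * z0 * z3 + 31449600 * z1 * z2 + 3931200 * z1 * z3
     + 9828000 * z2 * z3"

lemma gram_hi_7_sos:
  "gram_hi_7 z0 z1 z2 z3 =
   (356571533 * (100 * z0 + 41 * z1 + 145 * z2 + 28 * z3)^2
    + 1274218378 * (50 * z1 + 90 * z2 + 9 * z3)^2 + 4452378260000 * z2^2 + 471428495000 * z3^2
    + 589120434400 * z0^2 + 12256714700 * (z0 + z1)^2 + 10587228500 * (z0 - z2)^2
    + 15600292400 * (z0 - z3)^2 + 616743447996 * z1^2 + 8599535315 * (z1 + z2)^2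
    + 57610016 * (z1 + z3)^2 + 537652322900 * z2^2 + 22797310160 * (z2 - z3)^2 + 581552521934 * z3^2) / 500000"
  unfolding gram_hi_7_def by algebra

definition gram_hi_8 ::
  "real \<Rightarrow> real \<Rightarrow> real \<Rightarrow> real \<Rightarrow> real \<Rightarrow>
   real \<Rightarrow> real \<Rightarrow> real \<Rightarrow> real \<Rightarrow> real \<Rightarrow>
   real" where
  "gram_hi_8 z0 z1 z2 z3 z4 z5 z6 z7 z8 z9 =
     6191640 * z0^2 + 9271080 * z1^2 + 3407040 * z2^2 + 19024200 * z3^2 + 8648640 * z4^2
     + 8452080 * z5^2 + 19656000 * z6^2 + 22800960 * z7^2 + 22113000 * z8^2 + 24570000 * z9^2
     + 4029480 * z0 * z1 + 163800 * z0 * z2 - 11164608 * z0 * z3 + 6823440 * z0 * z4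
     + 5585580 * z0 * z5 - 5985720 * z0 * z6 - 9795240 * z0 * z7 + 7547904 * z0 * z8
     - 11859120 * z0 * z9 - 687960 * z1 * z2 - 16078608 * z1 * z3 - 2276820 * z1 * z4
     + 11737440 * z1 * z5 - 13824720 * z1 * z6 - 1932840 * z1 * z7 + 5569200 * z1 * z8
     - 9916920 * z1 * z9 + 671580 * z2 * z3 + 294840 * z2 * z4 - 1670760 * z2 * z5
     + 2082080 * z2 * z6 + 1638000 * z2 * z7 + 6322680 * z2 * z8 + 3064880 * z2 * z9
     - 88920 * z3 * z4 - 17755920 * z3 * z5 + 30607200 * z3 * z6 + 24289200 * z3 * z7
     - 13824720 * z3 * z8 + 32749920 * z3 * z9 + 1099280 * z4 * z5 + 9533160 * z4 * z6
     - 3013920 * z4 * z7 + 11007360 * z4 * z8 + 963144 * z4 * z9 - 13832910 * z5 * z6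
     - 8934120 * z5 * z7 + 7978880 * z5 * z8 - 14761656 * z5 * z9 + 24887520 * z6 * z7
     - 3950856 * z6 * z8 + 34398000 * z6 * z9 + 1113840 * z7 * z8 + 39452400 * z7 * z9
     - 1056510 * z8 * z9"

lemma gram_hi_8_sos:
  "gram_hi_8 z0 z1 z2 z3 z4 z5 z6 z7 z8 z9 =
   (536269710 * (100 * z0 + 38 * z1 + 2 * z2 - 104 * z3 + 64 * z4 + 52 * z5 - 56 * z6 - 91 * z7
    + 70 * z8 - 111 * z9)^2
    + 768520879 * (100 * z1 - 5 * z2 - 77 * z3 - 31 * z4 + 63 * z5 - 75 * z6 + 11 * z7 + 18 * z8
    - 36 * z9)^2
    + 255857262 * (100 * z2 + 5 * z3 - z4 - 25 * z5 + 31 * z6 + 37 * z7 + 124 * z8 + 58 * z9)^2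
    + 778332775 * (100 * z3 + 21 * z4 - 28 * z5 + 99 * z6 + 99 * z7 - 27 * z8 + 103 * z9)^2
    + 454257554 * (100 * z4 + 17 * z5 + 71 * z6 + 6 * z7 + 88 * z8 + 38 * z9)^2
    + 223257877 * (100 * z5 + 5 * z6 - 4 * z7 + 32 * z8 - 10 * z9)^2
    + 266339829 * (100 * z6 + 87 * z7 - 25 * z8 + 84 * z9)^2
    + 745548334 * (100 * z7 + 69 * z8 + 55 * z9)^2 + 646831513 * (100 * z8 + 11 * z9)^2
    + 2180672560000 * z9^2 + 679897566000 * z0^2 + 23084898000 * (z0 - z1)^2
    + 25353942000 * (z0 - z2)^2 + 5099016000 * (z0 - z3)^2 + 20406144000 * (z0 - z4)^2
    + 4187508000 * (z0 + z5)^2 + 10250376000 * (z0 + z6)^2 + 17565639000 * (z0 - z7)^2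
    + 20064030000 * (z0 + z8)^2 + 23033781000 * (z0 + z9)^2 + 547432793160 * z1^2
    + 476058460 * (z1 - z2)^2 + 2355337780 * (z1 - z3)^2 + 60203209820 * (z1 - z4)^2
    + 32630484660 * (z1 - z5)^2 + 7271464620 * (z1 - z6)^2 + 42627690280 * (z1 + z7)^2
    + 25215010800 * (z1 - z8)^2 + 70200801180 * (z1 + z9)^2 + 675237838830 * z2^2
    + 23524930265 * (z2 + z3)^2 + 14757532925 * (z2 - z4)^2 + 9424817955 * (z2 - z5)^2
    + 19749365695 * (z2 + z6)^2 + 12197866165 * (z2 + z7)^2 + 17200929090 * (z2 - z8)^2
    + 29185997800 * (z2 + z9)^2 + 678040240090 * z3^2 + 57272310397 * (z3 + z4)^2
    + 38404696541 * (z3 - z5)^2 + 2995215375 * (z3 - z6)^2 + 32547416897 * (z3 - z7)^2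
    + 279582846 * (z3 - z8)^2 + 37103597308 * (z3 - z9)^2 + 506195692543 * z4^2
    + 55118919843 * (z4 - z5)^2 + 66308699462 * (z4 + z6)^2 + 2901242152 * (z4 - z7)^2
    + 5600858395 * (z4 + z8)^2 + 38689942547 * (z4 + z9)^2 + 599110828558 * z5^2
    + 27666427033 * (z5 - z6)^2 + 24841401485 * (z5 - z7)^2 + 23340994070 * (z5 - z8)^2
    + 3038369808 * (z5 + z9)^2 + 489746814708 * z6^2 + 83153597038 * (z6 - z7)^2
    + 53147757085 * (z6 + z8)^2 + 57828104853 * (z6 - z9)^2 + 500894172103 * z7^2
    + 48864048604 * (z7 - z8)^2 + 31483408277 * (z7 - z9)^2 + 578550381907 * z8^2
    + 31828504397 * (z8 + z9)^2 + 454398684870 * z9^2) / 1000000"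
  unfolding gram_hi_8_def by algebra

definition gram_hi_9 ::
  "real \<Rightarrow> real \<Rightarrow> real \<Rightarrow> real \<Rightarrow> real \<Rightarrow>
   real \<Rightarrow> real" where
  "gram_hi_9 z0 z1 z2 z3 z4 z5 =
     3734640 * z0^2 + 4422600 * z1^2 + 3931200 * z2^2 + 3439800 * z3^2 + 3931200 * z4^2
     + 6388200 * z5^2 - 982800 * z0 * z1 + 1965600 * z0 * z3 - 982800 * z0 * z4 - 1965600 * z1 * z3
     + 3931200 * z1 * z4 + 3931200 * z1 * z5 + 2948400 * z2 * z5 - 1965600 * z3 * z4
     - 982800 * z3 * z5 + 1965600 * z4 * z5"

lemma gram_hi_9_sos:
  "gram_hi_9 z0 z1 z2 z3 z4 z5 =
   (251147844 * (100 * z0 - 20 * z1 + 39 * z3 - 20 * z4)^2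
    + 310329030 * (100 * z1 - 25 * z3 + 60 * z4 + 63 * z5)^2 + 1083215376 * (50 * z2 + 27 * z5)^2
    + 163068023 * (100 * z3 - 19 * z4 + z5)^2 + 570054852 * (50 * z4 - 7 * z5)^2
    + 3089537250000 * z5^2 + 1198046775600 * z0^2 + 10895688000 * (z0 + z1)^2
    + 3323408400 * (z0 + z3)^2 + 10895688000 * (z0 + z4)^2 + 1183178974320 * z1^2
    + 11082106680 * (z1 - z3)^2 + 3166682400 * (z1 + z4)^2 + 10527111000 * (z1 + z5)^2
    + 1211302317600 * z2^2 + 11859242400 * (z2 + z5)^2 + 1188242267416 * z3^2
    + 11581892980 * (z3 - z4)^2 + 18938580050 * (z3 - z5)^2 + 1191533647480 * z4^2
    + 12373757237 * (z4 + z5)^2 + 1195508374368 * z5^2) / 1000000"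
  unfolding gram_hi_9_def by algebra

definition gram_hi_10 ::
  "real \<Rightarrow> real \<Rightarrow> real \<Rightarrow> real \<Rightarrow> real \<Rightarrow>
   real \<Rightarrow> real \<Rightarrow> real" where
  "gram_hi_10 z0 z1 z2 z3 z4 z5 z6 =
     10319400 * z0^2 + 3800160 * z1^2 + 1965600 * z2^2 + 3931200 * z3^2 + 8714160 * z4^2
     + 13759200 * z5^2 + 54545400 * z6^2 + 1965600 * z0 * z1 + 4914000 * z0 * z2
     - 5896800 * z0 * z3 + 14742000 * z0 * z4 + 9828000 * z0 * z5 + 39312000 * z0 * z6
     + 1048320 * z1 * z2 + 982800 * z1 * z3 + 1965600 * z1 * z4 + 4914000 * z1 * z5
     + 7862400 * z1 * z6 - 1965600 * z2 * z3 + 4914000 * z2 * z4 + 3931200 * z2 * z5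
     + 14742000 * z2 * z6 - 4914000 * z3 * z4 - 982800 * z3 * z5 - 13759200 * z3 * z6
     + 5896800 * z4 * z5 + 35380800 * z4 * z6 + 28501200 * z5 * z6"

lemma gram_hi_10_sos:
  "gram_hi_10 z0 z1 z2 z3 z4 z5 z6 =
   (977417669 * (100 * z0 + 10 * z1 + 25 * z2 - 30 * z3 + 75 * z4 + 50 * z5 + 201 * z6)^2
    + 315611550 * (100 * z1 + 9 * z2 + 25 * z3 + 8 * z4 + 62 * z5 + 62 * z6)^2
    + 77841421 * (100 * z2 - 40 * z3 + 75 * z4 + 72 * z5 + 290 * z6)^2
    + 217580443 * (100 * z3 - 3 * z4 + 33 * z5 - 25 * z6)^2
    + 215355498 * (100 * z4 - 61 * z5 + 47 * z6)^2 + 809091830 * (100 * z5 + 29 * z6)^2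
    + 5433563100000 * z6^2 + 433054167900 * z0^2 + 5382331000 * (z0 + z1)^2
    + 13455827500 * (z0 + z2)^2 + 16146993000 * (z0 - z3)^2 + 40367482500 * (z0 + z4)^2
    + 26911655000 * (z0 + z5)^2 + 9904853100 * (z0 + z6)^2 + 508221092990 * z1^2
    + 4244812250 * (z1 - z2)^2 + 4403574300 * (z1 - z3)^2 + 2752491750 * (z1 - z4)^2
    + 11499555500 * (z1 + z5)^2 + 9798875310 * (z1 + z6)^2 + 472621530025 * z2^2
    + 9383663000 * (z2 - z3)^2 + 17807181525 * (z2 + z4)^2 + 7258437650 * (z2 + z5)^2
    + 25963759375 * (z2 + z6)^2 + 465486450650 * z3^2 + 22134158850 * (z3 - z4)^2
    + 8303568420 * (z3 - z5)^2 + 28057767330 * (z3 - z6)^2 + 400403189781 * z4^2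
    + 41405740707 * (z4 + z5)^2 + 77745030450 * (z4 + z6)^2 + 434760405963 * z5^2
    + 39574529111 * (z5 + z6)^2 + 380312234768 * z6^2) / 1000000"
  unfolding gram_hi_10_def by algebra

definition gram_hi_11 :: "real \<Rightarrow> real \<Rightarrow> real \<Rightarrow> real \<Rightarrow> real" where
  "gram_hi_11 z0 z1 z2 z3 =
     8845200 * z0^2 + 8386560 * z1^2 + 2948400 * z2^2 + 45700200 * z3^2 + 5896800 * z0 * z1
     + 3931200 * z0 * z2 + 31449600 * z0 * z3 + 3931200 * z1 * z2 + 20638800 * z1 * z3
     + 9828000 * z2 * z3"

lemma gram_hi_11_sos:
  "gram_hi_11 z0 z1 z2 z3 =
   (379503533 * (100 * z0 + 39 * z1 + 26 * z2 + 207 * z3)^2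
    + 29930551400 * (10 * z1 + 2 * z2 + 7 * z3)^2 + 471429330000 * z2^2 + 4452370385000 * z3^2
    + 611114838600 * z0^2 + 5863778700 * (z0 - z1)^2 + 3909185800 * (z0 - z2)^2
    + 6676866900 * (z0 + z3)^2 + 615679217054 * z1^2 + 627610462 * (z1 - z2)^2
    + 829380091 * (z1 + z3)^2 + 617451545624 * z2^2 + 4515734206 * (z2 - z3)^2 + 657763729686 * z3^2) / 500000"
  unfolding gram_hi_11_def by algebra

definition gram_hi_12 ::
  "real \<Rightarrow> real \<Rightarrow> real \<Rightarrow> real \<Rightarrow> real \<Rightarrow>
   real \<Rightarrow> real \<Rightarrow> real" where
  "gram_hi_12 z0 z1 z2 z3 z4 z5 z6 =
     14222520 * z0^2 + 14222520 * z1^2 + 1965600 * z2^2 + 4492800 * z3^2 + 51498720 * z4^2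
     + 4492800 * z5^2 + 51498720 * z6^2 + 20327580 * z0 * z1 - 687960 * z0 * z2 - 6968520 * z0 * z3
     + 41394080 * z0 * z4 - 7927920 * z0 * z5 + 44422560 * z0 * z6 - 687960 * z1 * z2
     - 7927920 * z1 * z3 + 44422560 * z1 * z4 - 6968520 * z1 * z5 + 41394080 * z1 * z6
     + 116480 * z2 * z3 + 2850120 * z2 * z4 + 116480 * z2 * z5 + 2850120 * z2 * z6
     - 10884510 * z3 * z4 + 2283120 * z3 * z5 - 14761656 * z3 * z6 - 14761656 * z4 * z5
     + 82407780 * z4 * z6 - 10884510 * z5 * z6"

lemma gram_hi_12_sos:
  "gram_hi_12 z0 z1 z2 z3 z4 z5 z6 =
   (1350024526 * (100 * z0 + 75 * z1 - 3 * z2 - 26 * z3 + 153 * z4 - 29 * z5 + 165 * z6)^2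
    + 584833781 * (100 * z1 - z2 - 23 * z3 + 113 * z4 - 9 * z5 + 68 * z6)^2
    + 493330032 * (50 * z2 - 2 * z3 + 83 * z4 - 2 * z5 + 83 * z6)^2
    + 256185339 * (100 * z3 + 59 * z4 - 26 * z6)^2 + 724708911 * (100 * z4 - 9 * z5 - 5 * z6)^2
    + 250265186 * (100 * z5 + 59 * z6)^2 + 7079605110000 * z6^2 + 442159253800 * z0^2
    + 38606055000 * (z0 + z1)^2 + 61027357800 * (z0 + z2)^2 + 25803767600 * (z0 + z3)^2
    + 41664752200 * (z0 + z4)^2 + 48888874600 * (z0 - z5)^2 + 64124679000 * (z0 - z6)^2
    + 563373885950 * z1^2 + 18258896450 * (z1 + z2)^2 + 13705522000 * (z1 + z3)^2
    + 111126838850 * (z1 + z4)^2 + 21606253050 * (z1 - z5)^2 + 13616779950 * (z1 + z6)^2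
    + 464671843288 * z2^2 + 11180086791 * (z2 - z3)^2 + 63487841887 * (z2 + z4)^2
    + 15142634591 * (z2 - z5)^2 + 85771204678 * (z2 + z6)^2 + 563725905960 * z3^2
    + 18524846459 * (z3 + z4)^2 + 607594601 * (z3 + z5)^2 + 73431916736 * (z3 + z6)^2
    + 579616001729 * z4^2 + 61862417649 * (z4 - z5)^2 + 14549756996 * (z4 - z6)^2
    + 546870378762 * z5^2 + 51753082201 * (z5 - z6)^2 + 196155631892 * z6^2) / 1000000"
  unfolding gram_hi_12_def by algebra

definition gram_hi_13 :: "real \<Rightarrow> real \<Rightarrow> real \<Rightarrow> real \<Rightarrow> real" where
  "gram_hi_13 z0 z1 z2 z3 =
     4717440 * z0^2 + 4422600 * z1^2 + 27027000 * z2^2 + 3439800 * z3^2 - 2948400 * z0 * z1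
     + 13759200 * z0 * z2 - 982800 * z0 * z3 - 10810800 * z1 * z2 + 982800 * z1 * z3
     - 2948400 * z2 * z3"

lemma gram_hi_13_sos:
  "gram_hi_13 z0 z1 z2 z3 =
   (2456147664 * (25 * z0 - 12 * z1 + 56 * z2 - 4 * z3)^2
    + 413496604 * (50 * z1 - 51 * z2 + 6 * z3)^2 + 391345299 * (100 * z2 - z3)^2
    + 840344935000 * z3^2 + 822093505200 * z0^2 + 255700800 * (z0 - z1)^2
    + 1193270400 * (z0 + z2)^2 + 85233600 * (z0 - z3)^2 + 817614024248 * z1^2
    + 2247570408 * (z1 + z2)^2 + 3755930928 * (z1 + z3)^2 + 797363995344 * z2^2
    + 21258432540 * (z2 - z3)^2 + 799879882265 * z3^2) / 500000"
  unfolding gram_hi_13_def by algebra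

definition gram_hi_14 :: "real \<Rightarrow> real \<Rightarrow> real \<Rightarrow> real \<Rightarrow> real" where
  "gram_hi_14 z0 z1 z2 z3 =
     4422600 * z0^2 + 4717440 * z1^2 + 3439800 * z2^2 + 27027000 * z3^2 - 2948400 * z0 * z1
     + 982800 * z0 * z2 - 10810800 * z0 * z3 - 982800 * z1 * z2 + 13759200 * z1 * z3
     - 2948400 * z2 * z3"

lemma gram_hi_14_sos:
  "gram_hi_14 z0 z1 z2 z3 =
   (277534458 * (100 * z0 - 53 * z1 + 18 * z2 - 195 * z3)^2
    + 5717807575 * (20 * z1 - 2 * z2 + 35 * z3)^2 + 168233186 * (100 * z2 - 7 * z3)^2
    + 7819266750000 * z3^2 + 1629304092000 * z0^2 + 3267372600 * (z0 - z1)^2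
    + 8162024400 * (z0 - z2)^2 + 6521931000 * (z0 + z3)^2 + 1636559054876 * z1^2
    + 2080175932 * (z1 + z2)^2 + 8816074070 * (z1 + z3)^2 + 1616477836946 * z2^2
    + 17955708030 * (z2 + z3)^2 + 1608634065961 * z3^2) / 1000000"
  unfolding gram_hi_14_def by algebra

definition gram_hi_15 :: "real \<Rightarrow> real \<Rightarrow> real \<Rightarrow> real \<Rightarrow> real" where
  "gram_hi_15 z0 z1 z2 z3 =
     2751840 * z0^2 + 2751840 * z1^2 + 7469280 * z2^2 + 7469280 * z3^2 + 720720 * z0 * z2
     + 982800 * z0 * z3 + 982800 * z1 * z2 + 720720 * z1 * z3 - 982800 * z2 * z3"

lemma gram_hi_15_sos:
  "gram_hi_15 z0 z1 z2 z3 =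
   (119986419 * (100 * z0 + 30 * z2 + 41 * z3)^2 + 119986419 * (100 * z1 + 41 * z2 + 30 * z3)^2
    + 2243129904 * (50 * z2 - 7 * z3)^2 + 5497498630000 * z3^2 + 1551030749100 * z0^2
    + 400743000 * (z0 + z2)^2 + 544317900 * (z0 - z3)^2 + 1551030749100 * z1^2
    + 544317900 * (z1 - z2)^2 + 400743000 * (z1 + z3)^2 + 1549354107321 * z2^2
    + 1471124340 * (z2 - z3)^2 + 1549766872025 * z3^2) / 1000000"
  unfolding gram_hi_15_def by algebra

lemma gram_hi_nonneg:
  "0 \<le> gram_hi_0 z0 z1 z2 z3 z4 z5 z6 z7 z8 z9 z10 z11 z12 z13 z14 z15"
  "0 \<le> gram_hi_1 z0 z1 z2 z3 z4 z5 z6 z7 z8 z9"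
  "0 \<le> gram_hi_2 z0 z1 z2 z3 z4 z5 z6 z7 z8 z9"
  "0 \<le> gram_hi_3 z0 z1 z2 z3 z4 z5 z6 z7"
  "0 \<le> gram_hi_4 z0 z1 z2 z3 z4 z5 z6 z7 z8 z9"
  "0 \<le> gram_hi_5 z0 z1 z2 z3 z4 z5 z6"
  "0 \<le> gram_hi_6 z0 z1 z2 z3 z4 z5"
  "0 \<le> gram_hi_7 z0 z1 z2 z3"
  "0 \<le> gram_hi_8 z0 z1 z2 z3 z4 z5 z6 z7 z8 z9"
  "0 \<le> gram_hi_9 z0 z1 z2 z3 z4 z5"
  "0 \<le> gram_hi_10 z0 z1 z2 z3 z4 z5 z6"
  "0 \<le> gram_hi_11 z0 z1 z2 z3"
  "0 \<le> gram_hi_12 z0 z1 z2 z3 z4 z5 z6"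
  "0 \<le> gram_hi_13 z0 z1 z2 z3"
  "0 \<le> gram_hi_14 z0 z1 z2 z3"
  "0 \<le> gram_hi_15 z0 z1 z2 z3"
  unfolding gram_hi_0_sos gram_hi_1_sos gram_hi_2_sos gram_hi_3_sos gram_hi_4_sos gram_hi_5_sos gram_hi_6_sos gram_hi_7_sos
    gram_hi_8_sos gram_hi_9_sos gram_hi_10_sos gram_hi_11_sos gram_hi_12_sos gram_hi_13_sos gram_hi_14_sos gram_hi_15_sos
  by (intro divide_nonneg_pos add_nonneg_nonneg mult_nonneg_nonneg; simp)+

lemma certificate_hi:
  fixes a b u v :: real
  shows "4914000 * f4_rat_part (1 + a) (1 + b) (1 + u) (1 + v)
         + 11007360 * f4_sqrt5_part (1 + a) (1 + b) (1 + u) (1 + v)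
         - 2457000 * (a^2 + b^2 + u^2 + v^2) =
    gram_hi_0 v u (u*v) b (b*v) (b*u) (b*u*v) (b^2) (b^2*u) a (a*v) (a*u) (a*u*v) (a*b) (a^2) (a^2*v) +
    (1 + v) * gram_hi_1 v u (u*v) b (b*u) a (a*v) (a*u) (a*b) (a^2) +
    (1 + u) * gram_hi_2 v u (u*v) b (b*v) (b*u) (b^2) a (a*v) (a*b) +
    (1 + u) * (1 + v) * gram_hi_3 v u (u*v) b (b*u) a (a*v) (a*b) +
    b * gram_hi_4 v u (u*v) b (b*u) a (a*v) (a*u) (a*b) (a^2) +
    b * (1 + v) * gram_hi_5 v u (u*v) b (b*u) a (a*u) +
    b * (1 + u) * gram_hi_6 v u (u*v) b a (a*v) +
    b * (1 + u) * (1 + v) * gram_hi_7 v u b a +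
    a * gram_hi_8 v u (u*v) b (b*v) (b*u) (b^2) a (a*v) (a*b) +
    a * (1 + v) * gram_hi_9 v u (u*v) b (b*u) a +
    a * (1 + u) * gram_hi_10 v u (u*v) b (b*v) a (a*v) +
    a * (1 + u) * (1 + v) * gram_hi_11 v u b a +
    a * b * gram_hi_12 v u (u*v) b (b*u) a (a*v) +
    a * b * (1 + v) * gram_hi_13 v u b a +
    a * b * (1 + u) * gram_hi_14 v u b a +
    a * b * (1 + u) * (1 + v) * gram_hi_15 v u b a"
  unfolding f4_rat_part_def f4_sqrt5_part_def
    gram_hi_0_def gram_hi_1_def gram_hi_2_def gram_hi_3_def gram_hi_4_def gram_hi_5_def gram_hi_6_def gram_hi_7_def
    gram_hi_8_def gram_hi_9_def gram_hi_10_def gram_hi_11_def gram_hi_12_def gram_hi_13_def gram_hi_14_def gram_hi_15_def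
  by algebra

lemma half_sq_dist_le_parts_lo:
  fixes c d x y :: real
  assumes "1 \<le> c" and "1 \<le> d" and "0 \<le> x" and "0 \<le> y"
  shows "((c-1)^2 + (d-1)^2 + (x-1)^2 + (y-1)^2) / 2
    \<le> f4_rat_part c d x y + 223/100 * f4_sqrt5_part c d x y"
proof -
  have shifted_nonneg: "0 \<le> 1 + (x - 1)" "0 \<le> 1 + (y - 1)"
    using assms by simp_all
  have "0 \<le> 4914000 * f4_rat_part (1 + (c-1)) (1 + (d-1)) (1 + (x-1)) (1 + (y-1))
      + 10958220 * f4_sqrt5_part (1 + (c-1)) (1 + (d-1)) (1 + (x-1)) (1 + (y-1))
      - 2457000 * ((c-1)^2 + (d-1)^2 + (x-1)^2 + (y-1)^2)"
    using assms unfolding certificate_lo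
    by (intro shifted_nonneg add_nonneg_nonneg mult_nonneg_nonneg gram_lo_nonneg) simp_all
  then show ?thesis by simp
qed

lemma half_sq_dist_le_parts_hi:
  fixes c d x y :: real
  assumes "1 \<le> c" and "1 \<le> d" and "0 \<le> x" and "0 \<le> y"
  shows "((c-1)^2 + (d-1)^2 + (x-1)^2 + (y-1)^2) / 2
    \<le> f4_rat_part c d x y + 56/25 * f4_sqrt5_part c d x y"
proof -
  have shifted_nonneg: "0 \<le> 1 + (x - 1)" "0 \<le> 1 + (y - 1)"
    using assms by simp_all
  have "0 \<le> 4914000 * f4_rat_part (1 + (c-1)) (1 + (d-1)) (1 + (x-1)) (1 + (y-1))
      + 11007360 * f4_sqrt5_part (1 + (c-1)) (1 + (d-1)) (1 + (x-1)) (1 + (y-1))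
      - 2457000 * ((c-1)^2 + (d-1)^2 + (x-1)^2 + (y-1)^2)"
    using assms unfolding certificate_hi
    by (intro shifted_nonneg add_nonneg_nonneg mult_nonneg_nonneg gram_hi_nonneg) simp_all
  then show ?thesis by simp
qed

lemma half_sq_dist_le_f4:
  fixes c d x y :: real
  assumes "1 \<le> c" and "1 \<le> d" and "0 \<le> x" and "0 \<le> y"
  shows "((c-1)^2 + (d-1)^2 + (x-1)^2 + (y-1)^2) / 2 \<le> f4 c d x y"
proof -
  define h where "h = ((c-1)^2 + (d-1)^2 + (x-1)^2 + (y-1)^2) / 2"
  have lo: "0 \<le> (f4_rat_part c d x y - h) + 223/100 * f4_sqrt5_part c d x y"
    using half_sq_dist_le_parts_lo[OF assms] unfolding h_def by linarith
  have hi: "0 \<le> (f4_rat_part c d x y - h) + 56/25 * f4_sqrt5_part c d x y"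
    using half_sq_dist_le_parts_hi[OF assms] unfolding h_def by linarith
  have "0 \<le> (f4_rat_part c d x y - h) + sqrt 5 * f4_sqrt5_part c d x y"
    by (rule affine_nonneg_between[OF lo hi]) (use sqrt5_bounds in linarith)+
  then show ?thesis unfolding f4_eq_parts h_def by linarith
qed

theorem theorem4p2:
  fixes c d x y :: real
  assumes "x > 0" and "y > 0" and "c \<ge> 1" and "d \<ge> 1"
  shows "f4 c d x y \<ge> 0 \<and> (f4 c d x y = 0 \<longleftrightarrow> c = 1 \<and> d = 1 \<and> x = 1 \<and> y = 1)"
proof -
  define D where "D = (c-1)^2 + (d-1)^2 + (x-1)^2 + (y-1)^2"
  have bound: "D / 2 \<le> f4 c d x y"
    using half_sq_dist_le_f4 assms unfolding D_def by simp
  have "0 \<le> D" unfolding D_def by simp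
  with bound have "f4 c d x y \<ge> 0" by linarith
  moreover have "c = 1 \<and> d = 1 \<and> x = 1 \<and> y = 1" if "f4 c d x y = 0"
  proof -
    from bound \<open>0 \<le> D\<close> that have "D = 0" by linarith
    then show ?thesis unfolding D_def by (simp add: add_nonneg_eq_0_iff)
  qed
  moreover have "f4 1 1 1 1 = 0" by (simp add: f4_def)
  ultimately show ?thesis by blast
qed

end
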